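(* Within the pseudovariety $\mathsf M$ of all finite monoids, the pseudoidentity $x^\omega=1$ is h-strong.
   Context: $\mathsf M$ is the pseudovariety of finite monoids (signature: multiplication and $1$); $\Omega_A\mathsf M$ is the free profinite monoid on a finite set $A$; in a profinite monoid $x^\omega=\lim x^{n!}$. An $\mathsf M$-pseudoidentity is $u=v$ with $u,v\in\Omega_B\mathsf M$, $B$ finite; it holds in a finite monoid $T$ if both sides agree under every continuous homomorphism $\Omega_B\mathsf M\to T$; $[\![\Sigma]\!]$ is the class of finite monoids satisfying $\Sigma$. Provability: for finite $A$, $\Sigma_0\subseteq\Omega_A\mathsf M\times\Omega_A\mathsf M$ is the set of pairs $(\mathbf t(\varphi(u),w_1,\dots,w_n),\mathbf t(\varphi(v),w_1,\dots,w_n))$ with $u=v$ or $v=u$ in $\Sigma$ ($u,v\in\Omega_B\mathsf M$), $\varphi:\Omega_B\mathsf M\to\Omega_A\mathsf M$ a continuous homomorphism, $\mathbf t$ a monoid term, $w_i\in\Omega_A\mathsf M$; $\Sigma_{2\alpha+1}$ is the transitive closure of $\Sigma_{2\alpha}$, $\Sigma_{2\alpha+2}$ the topological closure of $\Sigma_{2\alpha+1}$, unions at limit ordinals; $u=v$ is provable from $\Sigma$ if $(u,v)\in\bigcup_\alpha\Sigma_\alpha$. A pseudoidentity $\varepsilon$ is h-strong within $\mathsf M$ if every $\mathsf M$-pseudoidentity valid in $[\![\{\varepsilon\}]\!]$ is provable from $\{\varepsilon\}$. *)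

theory Defs
  imports "HOL-Algebra.Group"
begin

text \<open>Finite monoids are represented as HOL-Algebra monoids with carrier a subset of nat
  (every finite monoid is isomorphic to one of these).  Elements of the free profinite
  monoid on a finite set A are represented as implicit operations: families, indexed by
  finite monoids T, of maps (A \<rightarrow> T) \<rightarrow> T, natural w.r.t. monoid homomorphisms.\<close>

type_synonym 'a io = "nat monoid \<Rightarrow> ('a \<Rightarrow> nat) \<Rightarrow> nat"

definition finmon :: "nat monoid set" where
  "finmon = {T. monoid T \<and> finite (carrier T)}"

definition mhom :: "nat monoid \<Rightarrow> nat monoid \<Rightarrow> (nat \<Rightarrow> nat) set" where
  "mhom S T = {h. h \<in> carrier S \<rightarrow> carrier T \<and> h \<one>\<^bsub>S\<^esub> = \<one>\<^bsub>T\<^esub> \<and>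
     (\<forall>x\<in>carrier S. \<forall>y\<in>carrier S. h (x \<otimes>\<^bsub>S\<^esub> y) = h x \<otimes>\<^bsub>T\<^esub> h y)}"

definition valid_asg :: "'a set \<Rightarrow> nat monoid \<Rightarrow> ('a \<Rightarrow> nat) \<Rightarrow> bool" where
  "valid_asg A T f \<longleftrightarrow> T \<in> finmon \<and> f \<in> A \<rightarrow>\<^sub>E carrier T"

definition Omega :: "'a set \<Rightarrow> 'a io set" where
  "Omega A = {u. (\<forall>T f. \<not> valid_asg A T f \<longrightarrow> u T f = undefined)
     \<and> (\<forall>T f. valid_asg A T f \<longrightarrow> u T f \<in> carrier T)
     \<and> (\<forall>S\<in>finmon. \<forall>T\<in>finmon. \<forall>h\<in>mhom S T. \<forall>f\<in>A \<rightarrow>\<^sub>E carrier S.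
           u T (restrict (h \<circ> f) A) = h (u S f))}"

definition gen :: "'a set \<Rightarrow> 'a \<Rightarrow> 'a io" where
  "gen A a = (\<lambda>T f. if valid_asg A T f then f a else undefined)"

definition ione :: "'a set \<Rightarrow> 'a io" where
  "ione A = (\<lambda>T f. if valid_asg A T f then \<one>\<^bsub>T\<^esub> else undefined)"

definition imult :: "'a set \<Rightarrow> 'a io \<Rightarrow> 'a io \<Rightarrow> 'a io" where
  "imult A u v = (\<lambda>T f. if valid_asg A T f then u T f \<otimes>\<^bsub>T\<^esub> v T f else undefined)"

definition ipow :: "'a set \<Rightarrow> 'a io \<Rightarrow> nat \<Rightarrow> 'a io" where
  "ipow A u n = (imult A u ^^ n) (ione A)"

text \<open>Profinite topology: the sets {v. \<forall>T\<in>Ts. v T = u T} (Ts a finite set of finite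
  monoids) form a neighbourhood base of u.\<close>
definition agree_on :: "nat monoid set \<Rightarrow> 'a io \<Rightarrow> 'a io \<Rightarrow> bool" where
  "agree_on Ts u v \<longleftrightarrow> (\<forall>T\<in>Ts. u T = v T)"

definition fin_tests :: "nat monoid set set" where
  "fin_tests = {Ts. finite Ts \<and> Ts \<subseteq> finmon}"

definition omega :: "'a set \<Rightarrow> 'a io \<Rightarrow> 'a io" where
  "omega A u = (THE w. w \<in> Omega A \<and>
     (\<forall>Ts\<in>fin_tests. \<forall>\<^sub>F n in sequentially. agree_on Ts (ipow A u (fact n)) w))"

definition cont_hom :: "'b set \<Rightarrow> 'a set \<Rightarrow> ('b io \<Rightarrow> 'a io) \<Rightarrow> bool" where
  "cont_hom B A \<phi> \<longleftrightarrow> (\<forall>u\<in>Omega B. \<phi> u \<in> Omega A)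
     \<and> (\<forall>u\<in>Omega B. \<forall>v\<in>Omega B. \<phi> (imult B u v) = imult A (\<phi> u) (\<phi> v))
     \<and> \<phi> (ione B) = ione A
     \<and> (\<forall>u\<in>Omega B. \<forall>S g. \<exists>Ts\<in>fin_tests. \<forall>v\<in>Omega B.
           agree_on Ts v u \<longrightarrow> \<phi> v S g = \<phi> u S g)"

definition cont_hom_fin :: "'b set \<Rightarrow> nat monoid \<Rightarrow> ('b io \<Rightarrow> nat) \<Rightarrow> bool" where
  "cont_hom_fin B T \<psi> \<longleftrightarrow> (\<forall>u\<in>Omega B. \<psi> u \<in> carrier T)
     \<and> (\<forall>u\<in>Omega B. \<forall>v\<in>Omega B. \<psi> (imult B u v) = \<psi> u \<otimes>\<^bsub>T\<^esub> \<psi> v)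
     \<and> \<psi> (ione B) = \<one>\<^bsub>T\<^esub>
     \<and> (\<forall>u\<in>Omega B. \<exists>Ts\<in>fin_tests. \<forall>v\<in>Omega B. agree_on Ts v u \<longrightarrow> \<psi> v = \<psi> u)"

type_synonym 'b pseudoid = "'b set \<times> 'b io \<times> 'b io"

definition holds_in :: "nat monoid \<Rightarrow> 'b pseudoid \<Rightarrow> bool" where
  "holds_in T e = (case e of (B, u, v) \<Rightarrow>
     \<forall>\<psi>. cont_hom_fin B T \<psi> \<longrightarrow> \<psi> u = \<psi> v)"

definition models :: "'b pseudoid set \<Rightarrow> nat monoid set" where
  "models \<Sigma> = {T\<in>finmon. \<forall>e\<in>\<Sigma>. holds_in T e}"

text \<open>Value of a monoid term t(x, w_1, ..., w_n): a word over the variables, written as a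
  list where None stands for x and Some w for an occurrence of the substituted w_i.\<close>
definition ifill :: "'a set \<Rightarrow> 'a io option list \<Rightarrow> 'a io \<Rightarrow> 'a io" where
  "ifill A c p = foldr (imult A) (map (case_option p id) c) (ione A)"

definition Sigma0 :: "'a set \<Rightarrow> 'b pseudoid set \<Rightarrow> ('a io \<times> 'a io) set" where
  "Sigma0 A \<Sigma> = {(ifill A c (\<phi> u), ifill A c (\<phi> v)) | c \<phi> B u v.
      ((B, u, v) \<in> \<Sigma> \<or> (B, v, u) \<in> \<Sigma>) \<and> cont_hom B A \<phi>
      \<and> (\<forall>w. Some w \<in> set c \<longrightarrow> w \<in> Omega A)}"

definition tclosure :: "'a set \<Rightarrow> ('a io \<times> 'a io) set \<Rightarrow> ('a io \<times> 'a io) set" where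
  "tclosure A R = {(s, t). s \<in> Omega A \<and> t \<in> Omega A \<and>
     (\<forall>Ts\<in>fin_tests. \<exists>(s', t')\<in>R. agree_on Ts s' s \<and> agree_on Ts t' t)}"

text \<open>The union of the transfinite sequence \<Sigma>_\<alpha> is the least relation containing \<Sigma>_0
  that is transitive and topologically closed.\<close>
definition provable :: "'a set \<Rightarrow> 'b pseudoid set \<Rightarrow> ('a io \<times> 'a io) set" where
  "provable A \<Sigma> = \<Inter>{R. Sigma0 A \<Sigma> \<subseteq> R \<and> trans R \<and> tclosure A R \<subseteq> R}"

definition h_strong :: "'b pseudoid \<Rightarrow> 'a itself \<Rightarrow> bool" where
  "h_strong e _ \<longleftrightarrow> (\<forall>(A::'a set) s t. finite A \<and> s \<in> Omega A \<and> t \<in> Omega A \<and>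
      (\<forall>T\<in>models {e}. holds_in T (A, s, t)) \<longrightarrow> (s, t) \<in> provable A {e})"

text \<open>The pseudoidentity x^\<omega> = 1 over B = {x} (x the unique element of unit).\<close>
definition eps_omega :: "unit pseudoid" where
  "eps_omega = (UNIV, omega UNIV (gen UNIV ()), ione UNIV)"

end

theory Submission
  imports Defs
begin

text \<open>The finite monoids satisfying x\<omega> = 1 are the finite groups. Iterating
  e \<mapsto> (e a e)\<omega> over the generators a, starting from 1, gives a descending sequence of
  idempotents that stabilizes; its limit is an implicit operation E that is provably equal to 1
  (being a limit of \<omega>-powers) and whose value e at every assignment satisfies (e a e)\<omega> = e for
  every generator a. Substituting E a E for each generator a is then provably the identity, so s
  is provably equal to E s(E a E), and likewise t. But each e a e lies in the maximal subgroup at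
  e, a finite group in which s and t agree, so E s(E a E) = E t(E a E) holds outright.\<close>

subsection \<open>Idempotent powers in finite monoids\<close>

lemma finite_nat_seq_repeats:
  assumes "finite S" and "\<And>n. n \<le> card S \<Longrightarrow> x n \<in> S"
  shows "\<exists>i j. i < j \<and> j \<le> card S \<and> x i = x j"
proof -
  have "\<not> inj_on x {0..card S}"
  proof
    assume "inj_on x {0..card S}"
    moreover have "x ` {0..card S} \<subseteq> S" using assms(2) by auto
    ultimately have "card {0..card S} \<le> card S"
      using card_inj_on_le[OF _ _ assms(1)] by blast
    then show False by simp
  qed
  then obtain i j where "i \<le> card S" "j \<le> card S" "i \<noteq> j" "x i = x j"
    unfolding inj_on_def by auto
  then show ?thesis by (metis linorder_neq_iff)
qed

lemma (in monoid) nat_pow_eventually_periodic: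
  assumes x: "x \<in> carrier G" and eq: "x [^] i = x [^] (j::nat)" and "i < j" and "i \<le> m"
  shows "x [^] (m + c * (j - i)) = x [^] m"
proof (induction c)
  case (Suc c)
  have "m + Suc c * (j - i) = (m + c * (j - i) - i) + j" "m + c * (j - i) = (m + c * (j - i) - i) + i"
    using assms by simp_all
  then have "x [^] (m + Suc c * (j - i)) = x [^] (m + c * (j - i) - i) \<otimes> x [^] j"
    by (simp only: nat_pow_mult x)
  also have "\<dots> = x [^] (m + c * (j - i) - i) \<otimes> x [^] i" using eq by simp
  also have "\<dots> = x [^] (m + c * (j - i))"
    using \<open>m + c * (j - i) = _\<close> by (simp only: nat_pow_mult x)
  finally show ?case using Suc by simp
qed simp

lemma (in monoid) fact_pow_idempotent:
  assumes fin: "finite (carrier G)" and x: "x \<in> carrier G" and k: "card (carrier G) \<le> k"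
  shows "x [^] (fact k :: nat) \<otimes> x [^] (fact k :: nat) = x [^] (fact k :: nat)"
proof -
  obtain i j where ij: "i < j" "j \<le> card (carrier G)" "x [^] i = x [^] (j::nat)"
    using finite_nat_seq_repeats[OF fin, of "\<lambda>n. x [^] n"] x by auto
  have "(j - i) dvd fact k" using ij k by (intro dvd_fact) auto
  then obtain q where q: "fact k = q * (j - i)" by (metis dvd_div_mult_self)
  have "i \<le> fact k" using ij k fact_ge_self[of k] by linarith
  then have "x [^] (fact k + q * (j - i)) = x [^] (fact k :: nat)"
    using nat_pow_eventually_periodic[OF x ij(3) ij(1)] by blast
  then show ?thesis using q by (simp add: nat_pow_mult x)
qed

lemma (in monoid) idempotent_nat_pow:
  assumes "p \<in> carrier G" and "p \<otimes> p = p" and "n \<ge> 1"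
  shows "p [^] (n::nat) = p"
  using assms(3)
proof (induction n)
  case (Suc n) then show ?case by (cases "n = 0") (auto simp: assms(1,2))
qed simp

lemma (in monoid) idempotent_powers_eq:
  assumes x: "x \<in> carrier G" and "a \<ge> 1" and "b \<ge> 1"
    and "x [^] a \<otimes> x [^] a = x [^] (a::nat)" and "x [^] b \<otimes> x [^] b = x [^] (b::nat)"
  shows "x [^] a = x [^] b"
proof -
  have "x [^] a = (x [^] a) [^] b" using idempotent_nat_pow assms by simp
  also have "\<dots> = (x [^] b) [^] a" by (simp add: nat_pow_pow x mult.commute)
  also have "\<dots> = x [^] b" using idempotent_nat_pow assms by simp
  finally show ?thesis .
qed

lemma (in monoid) nat_pow_eq_one_Units:
  assumes x: "x \<in> carrier G" and "x [^] n = \<one>" and "n \<ge> (1::nat)"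
  shows "x \<in> Units G"
proof -
  have "x \<otimes> x [^] (n - 1) = \<one>" "x [^] (n - 1) \<otimes> x = \<one>"
    using assms nat_pow_Suc2[OF x, of "n - 1"] nat_pow_Suc[of x "n - 1"] by simp_all
  then show ?thesis using x unfolding Units_def by auto
qed

text \<open>The factorial of the order of T is a multiple of the period of x and at least its index,
  so this power of x is idempotent.\<close>
definition idem_pow :: "nat monoid \<Rightarrow> nat \<Rightarrow> nat" where
  "idem_pow T x = x [^]\<^bsub>T\<^esub> (fact (card (carrier T)) :: nat)"

lemma finmonD: "T \<in> finmon \<Longrightarrow> monoid T \<and> finite (carrier T)"
  by (simp add: finmon_def)

lemma idem_pow_closed: "T \<in> finmon \<Longrightarrow> x \<in> carrier T \<Longrightarrow> idem_pow T x \<in> carrier T"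
  by (simp add: idem_pow_def finmonD monoid.nat_pow_closed)

lemma idem_pow_idempotent:
  "T \<in> finmon \<Longrightarrow> x \<in> carrier T \<Longrightarrow> idem_pow T x \<otimes>\<^bsub>T\<^esub> idem_pow T x = idem_pow T x"
  unfolding idem_pow_def by (rule monoid.fact_pow_idempotent) (auto dest: finmonD)

lemma idem_pow_unique:
  assumes T: "T \<in> finmon" and x: "x \<in> carrier T" and "n \<ge> 1"
    and "x [^]\<^bsub>T\<^esub> n \<otimes>\<^bsub>T\<^esub> x [^]\<^bsub>T\<^esub> n = x [^]\<^bsub>T\<^esub> (n::nat)"
  shows "x [^]\<^bsub>T\<^esub> n = idem_pow T x"
  using monoid.idempotent_powers_eq[OF _ x assms(3) fact_ge_1] assms idem_pow_idempotent[OF T x]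
  by (simp add: idem_pow_def finmonD)

lemma idem_pow_fact:
  assumes T: "T \<in> finmon" and x: "x \<in> carrier T" and "card (carrier T) \<le> k"
  shows "x [^]\<^bsub>T\<^esub> (fact k :: nat) = idem_pow T x"
  using assms finmonD[OF T] by (intro idem_pow_unique fact_ge_1 monoid.fact_pow_idempotent) auto

lemma mhom_closed: "h \<in> mhom S T \<Longrightarrow> x \<in> carrier S \<Longrightarrow> h x \<in> carrier T"
  by (auto simp: mhom_def)

lemma mhom_one: "h \<in> mhom S T \<Longrightarrow> h \<one>\<^bsub>S\<^esub> = \<one>\<^bsub>T\<^esub>"
  by (auto simp: mhom_def)

lemma mhom_mult:
  "h \<in> mhom S T \<Longrightarrow> x \<in> carrier S \<Longrightarrow> y \<in> carrier S \<Longrightarrow> h (x \<otimes>\<^bsub>S\<^esub> y) = h x \<otimes>\<^bsub>T\<^esub> h y"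
  by (auto simp: mhom_def)

lemma mhom_nat_pow:
  "h \<in> mhom S T \<Longrightarrow> monoid S \<Longrightarrow> x \<in> carrier S \<Longrightarrow> h (x [^]\<^bsub>S\<^esub> (n::nat)) = h x [^]\<^bsub>T\<^esub> n"
  by (induction n) (auto simp: mhom_one mhom_mult monoid.nat_pow_closed)

lemma mhom_idem_pow:
  assumes S: "S \<in> finmon" and T: "T \<in> finmon" and h: "h \<in> mhom S T" and x: "x \<in> carrier S"
  shows "h (idem_pow S x) = idem_pow T (h x)"
proof -
  have pow: "h (idem_pow S x) = h x [^]\<^bsub>T\<^esub> (fact (card (carrier S)) :: nat)"
    unfolding idem_pow_def using mhom_nat_pow[OF h _ x] finmonD[OF S] by simp
  have "h (idem_pow S x) \<otimes>\<^bsub>T\<^esub> h (idem_pow S x) = h (idem_pow S x)"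
    using idem_pow_idempotent[OF S x] mhom_mult[OF h idem_pow_closed[OF S x] idem_pow_closed[OF S x]]
    by simp
  then show ?thesis using idem_pow_unique[OF T mhom_closed[OF h x] fact_ge_1] pow by simp
qed

subsection \<open>Implicit operations\<close>

lemma valid_asgI: "T \<in> finmon \<Longrightarrow> f \<in> A \<rightarrow>\<^sub>E carrier T \<Longrightarrow> valid_asg A T f"
  by (simp add: valid_asg_def)

lemma valid_asgD: "valid_asg A T f \<Longrightarrow> T \<in> finmon \<and> monoid T \<and> f \<in> A \<rightarrow>\<^sub>E carrier T"
  by (auto simp: valid_asg_def finmon_def)

lemma valid_asg_finmon: "valid_asg A T f \<Longrightarrow> T \<in> finmon"
  by (simp add: valid_asg_def)

lemma valid_asg_monoid: "valid_asg A T f \<Longrightarrow> monoid T"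
  by (simp add: valid_asg_def finmon_def)

lemma valid_asg_mhom:
  "T \<in> finmon \<Longrightarrow> h \<in> mhom S T \<Longrightarrow> f \<in> A \<rightarrow>\<^sub>E carrier S \<Longrightarrow> valid_asg A T (restrict (h \<circ> f) A)"
  by (auto simp: valid_asg_def mhom_def)

lemma Omega_undefined: "u \<in> Omega A \<Longrightarrow> \<not> valid_asg A T f \<Longrightarrow> u T f = undefined"
  by (simp add: Omega_def)

lemma Omega_closed: "u \<in> Omega A \<Longrightarrow> valid_asg A T f \<Longrightarrow> u T f \<in> carrier T"
  by (simp add: Omega_def)

lemma Omega_natural:
  "u \<in> Omega A \<Longrightarrow> S \<in> finmon \<Longrightarrow> T \<in> finmon \<Longrightarrow> h \<in> mhom S T \<Longrightarrow> f \<in> A \<rightarrow>\<^sub>E carrier S \<Longrightarrow>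
   u T (restrict (h \<circ> f) A) = h (u S f)"
  unfolding Omega_def by blast

lemma OmegaI:
  assumes "\<And>T f. \<not> valid_asg A T f \<Longrightarrow> u T f = undefined"
    and "\<And>T f. valid_asg A T f \<Longrightarrow> u T f \<in> carrier T"
    and "\<And>S T h f. S \<in> finmon \<Longrightarrow> T \<in> finmon \<Longrightarrow> h \<in> mhom S T \<Longrightarrow> f \<in> A \<rightarrow>\<^sub>E carrier S \<Longrightarrow>
           u T (restrict (h \<circ> f) A) = h (u S f)"
  shows "u \<in> Omega A"
  using assms unfolding Omega_def by blast

lemma Omega_eqI:
  assumes "u \<in> Omega A" "v \<in> Omega A" "\<And>T f. valid_asg A T f \<Longrightarrow> u T f = v T f"
  shows "u = v"
proof (intro ext)
  fix T f show "u T f = v T f"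
    using assms Omega_undefined[of u A T f] Omega_undefined[of v A T f]
    by (cases "valid_asg A T f") auto
qed

lemma ione_val: "valid_asg A T f \<Longrightarrow> ione A T f = \<one>\<^bsub>T\<^esub>"
  by (simp add: ione_def)

lemma gen_val: "valid_asg A T f \<Longrightarrow> gen A a T f = f a"
  by (simp add: gen_def)

lemma imult_val: "valid_asg A T f \<Longrightarrow> imult A u v T f = u T f \<otimes>\<^bsub>T\<^esub> v T f"
  by (simp add: imult_def)

lemma ione_Omega: "ione A \<in> Omega A"
proof (rule OmegaI)
  fix S T h f assume "S \<in> finmon" "T \<in> finmon" "h \<in> mhom S T" "f \<in> A \<rightarrow>\<^sub>E carrier S"
  then show "ione A T (restrict (h \<circ> f) A) = h (ione A S f)"
    using valid_asg_mhom[of T h S f A] by (simp add: ione_def valid_asg_def mhom_one)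
qed (auto simp: ione_def dest: valid_asgD intro: monoid.one_closed)

lemma gen_Omega: "a \<in> A \<Longrightarrow> gen A a \<in> Omega A"
proof (rule OmegaI)
  fix S T h f assume "a \<in> A" "S \<in> finmon" "T \<in> finmon" "h \<in> mhom S T" "f \<in> A \<rightarrow>\<^sub>E carrier S"
  then show "gen A a T (restrict (h \<circ> f) A) = h (gen A a S f)"
    using valid_asg_mhom[of T h S f A] by (simp add: gen_def valid_asg_def)
qed (auto simp: gen_def valid_asg_def)

lemma imult_Omega:
  assumes u: "u \<in> Omega A" and v: "v \<in> Omega A"
  shows "imult A u v \<in> Omega A"
proof (rule OmegaI)
  fix S T h f assume S: "S \<in> finmon" and T: "T \<in> finmon" and h: "h \<in> mhom S T"
    and f: "f \<in> A \<rightarrow>\<^sub>E carrier S"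
  have "valid_asg A S f" using S f by (rule valid_asgI)
  then show "imult A u v T (restrict (h \<circ> f) A) = h (imult A u v S f)"
    using valid_asg_mhom[OF T h f] Omega_natural[OF _ S T h f] u v
      mhom_mult[OF h Omega_closed[OF u] Omega_closed[OF v]]
    by (simp add: imult_def)
next
  fix T f assume "valid_asg A T f"
  then show "imult A u v T f \<in> carrier T"
    using Omega_closed[OF u] Omega_closed[OF v] valid_asgD monoid.m_closed by (fastforce simp: imult_def)
qed (simp add: imult_def)

lemma imult_one_left: "u \<in> Omega A \<Longrightarrow> imult A (ione A) u = u"
  by (rule Omega_eqI[OF imult_Omega[OF ione_Omega]])
    (simp_all add: imult_val ione_val Omega_closed monoid.l_one[OF valid_asg_monoid])

lemma imult_one_right: "u \<in> Omega A \<Longrightarrow> imult A u (ione A) = u"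
  by (rule Omega_eqI[OF imult_Omega[OF _ ione_Omega]])
    (simp_all add: imult_val ione_val Omega_closed monoid.r_one[OF valid_asg_monoid])

lemma imult_assoc:
  assumes "u \<in> Omega A" "v \<in> Omega A" "w \<in> Omega A"
  shows "imult A (imult A u v) w = imult A u (imult A v w)"
proof (rule Omega_eqI[of _ A])
  fix T f assume "valid_asg A T f"
  then show "imult A (imult A u v) w T f = imult A u (imult A v w) T f"
    using assms by (simp add: imult_val Omega_closed monoid.m_assoc[OF valid_asg_monoid])
qed (simp_all add: assms imult_Omega)

lemma ipow_Omega: "u \<in> Omega A \<Longrightarrow> ipow A u n \<in> Omega A"
  by (induction n) (auto simp: ipow_def ione_Omega imult_Omega)

lemma ipow_val:
  assumes "u \<in> Omega A" and "valid_asg A T f"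
  shows "ipow A u n T f = u T f [^]\<^bsub>T\<^esub> n"
proof (induction n)
  case (Suc n)
  then show ?case
    using assms monoid.nat_pow_Suc2[OF valid_asg_monoid[OF assms(2)] Omega_closed[OF assms]]
    by (simp add: ipow_def imult_val)
qed (simp add: ipow_def ione_val assms(2))

lemma agree_on_refl: "agree_on Ts x x"
  by (simp add: agree_on_def)

lemma agree_on_imult:
  "agree_on Ts x x' \<Longrightarrow> agree_on Ts y y' \<Longrightarrow> agree_on Ts (imult A x y) (imult A x' y')"
  unfolding agree_on_def imult_def by (intro ballI ext) simp

lemma card_le_sum_fin_tests:
  "Ts \<in> fin_tests \<Longrightarrow> T \<in> Ts \<Longrightarrow> card (carrier T) \<le> (\<Sum>T\<in>Ts. card (carrier T))"
  by (rule member_le_sum) (auto simp: fin_tests_def)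

subsection \<open>The \<omega>-power\<close>

lemma ipow_fact_converges:
  assumes u: "u \<in> Omega A" and Ts: "Ts \<in> fin_tests"
  shows "\<forall>\<^sub>F n in sequentially. agree_on Ts (ipow A u (fact n))
    (\<lambda>T f. if valid_asg A T f then idem_pow T (u T f) else undefined)"
proof (rule eventually_sequentiallyI)
  fix n assume n: "(\<Sum>T\<in>Ts. card (carrier T)) \<le> n"
  show "agree_on Ts (ipow A u (fact n))
    (\<lambda>T f. if valid_asg A T f then idem_pow T (u T f) else undefined)"
    unfolding agree_on_def
  proof (intro ballI ext)
    fix T f assume T: "T \<in> Ts"
    show "ipow A u (fact n) T f = (if valid_asg A T f then idem_pow T (u T f) else undefined)"
    proof (cases "valid_asg A T f")
      case True
      have "card (carrier T) \<le> n" using card_le_sum_fin_tests[OF Ts T] n by linarith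
      then show ?thesis
        using ipow_val[OF u True] idem_pow_fact[OF valid_asg_finmon[OF True] Omega_closed[OF u True]]
          True by simp
    qed (simp add: Omega_undefined[OF ipow_Omega[OF u]])
  qed
qed

lemma fact_pow_limit_unique:
  assumes "w1 \<in> Omega A" "w2 \<in> Omega A"
    and "\<forall>Ts\<in>fin_tests. \<forall>\<^sub>F n in sequentially. agree_on Ts (ipow A u (fact n)) w1"
    and "\<forall>Ts\<in>fin_tests. \<forall>\<^sub>F n in sequentially. agree_on Ts (ipow A u (fact n)) w2"
  shows "w1 = w2"
proof (rule Omega_eqI[OF assms(1,2)])
  fix T f assume "valid_asg A T f"
  then have "{T} \<in> fin_tests" by (simp add: fin_tests_def valid_asg_def)
  then have "\<forall>\<^sub>F n in sequentially.
      agree_on {T} (ipow A u (fact n)) w1 \<and> agree_on {T} (ipow A u (fact n)) w2"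
    using assms(3,4) by (simp add: eventually_conj)
  then obtain N where "\<forall>n\<ge>N. agree_on {T} (ipow A u (fact n)) w1 \<and> agree_on {T} (ipow A u (fact n)) w2"
    unfolding eventually_sequentially by blast
  then have "agree_on {T} (ipow A u (fact N)) w1" "agree_on {T} (ipow A u (fact N)) w2"
    by auto
  then show "w1 T f = w2 T f" by (simp add: agree_on_def)
qed

lemma idem_pow_pointwise_Omega:
  assumes u: "u \<in> Omega A"
  shows "(\<lambda>T f. if valid_asg A T f then idem_pow T (u T f) else undefined) \<in> Omega A"
proof (rule OmegaI)
  fix S T h f assume S: "S \<in> finmon" and T: "T \<in> finmon" and h: "h \<in> mhom S T"
    and f: "f \<in> A \<rightarrow>\<^sub>E carrier S"
  have "valid_asg A S f" using S f by (rule valid_asgI)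
  then show "(if valid_asg A T (restrict (h \<circ> f) A)
      then idem_pow T (u T (restrict (h \<circ> f) A)) else undefined) =
    h (if valid_asg A S f then idem_pow S (u S f) else undefined)"
    using valid_asg_mhom[OF T h f] Omega_natural[OF u S T h f] mhom_idem_pow[OF S T h]
      Omega_closed[OF u] by simp
qed (simp_all add: idem_pow_closed[OF valid_asg_finmon Omega_closed[OF u]])

lemma omega_eq_idem_pow:
  assumes u: "u \<in> Omega A"
  shows "omega A u = (\<lambda>T f. if valid_asg A T f then idem_pow T (u T f) else undefined)"
proof -
  let ?w = "\<lambda>T f. if valid_asg A T f then idem_pow T (u T f) else undefined"
  have "\<forall>Ts\<in>fin_tests. \<forall>\<^sub>F n in sequentially. agree_on Ts (ipow A u (fact n)) ?w"
    using ipow_fact_converges[OF u] by blast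
  then show ?thesis
    unfolding omega_def
    using idem_pow_pointwise_Omega[OF u] fact_pow_limit_unique[OF _ idem_pow_pointwise_Omega[OF u]]
    by (intro the_equality) blast+
qed

lemma omega_Omega: "u \<in> Omega A \<Longrightarrow> omega A u \<in> Omega A"
  by (simp add: omega_eq_idem_pow idem_pow_pointwise_Omega)

lemma omega_val: "u \<in> Omega A \<Longrightarrow> valid_asg A T f \<Longrightarrow> omega A u T f = idem_pow T (u T f)"
  by (simp add: omega_eq_idem_pow)

lemma ipow_fact_converges_omega:
  "u \<in> Omega A \<Longrightarrow> Ts \<in> fin_tests \<Longrightarrow>
   \<forall>\<^sub>F n in sequentially. agree_on Ts (ipow A u (fact n)) (omega A u)"
  by (simp add: omega_eq_idem_pow ipow_fact_converges)

subsection \<open>Substitutions\<close>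

definition subst :: "'b set \<Rightarrow> 'a set \<Rightarrow> ('b \<Rightarrow> 'a io) \<Rightarrow> 'b io \<Rightarrow> 'a io" where
  "subst B A \<sigma> u = (\<lambda>T f. if valid_asg A T f then u T (\<lambda>b\<in>B. \<sigma> b T f) else undefined)"

lemma valid_asg_subst:
  "\<sigma> ` B \<subseteq> Omega A \<Longrightarrow> valid_asg A T f \<Longrightarrow> valid_asg B T (\<lambda>b\<in>B. \<sigma> b T f)"
  by (auto simp: valid_asg_def intro: Omega_closed[OF _ valid_asgI])

lemma subst_Omega:
  assumes \<sigma>: "\<sigma> ` B \<subseteq> Omega A" and u: "u \<in> Omega B"
  shows "subst B A \<sigma> u \<in> Omega A"
proof (rule OmegaI)
  fix S T h f assume S: "S \<in> finmon" and T: "T \<in> finmon" and h: "h \<in> mhom S T"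
    and f: "f \<in> A \<rightarrow>\<^sub>E carrier S"
  have vS: "valid_asg A S f" using S f by (rule valid_asgI)
  have g: "(\<lambda>b\<in>B. \<sigma> b S f) \<in> B \<rightarrow>\<^sub>E carrier S"
    using valid_asg_subst[OF \<sigma> vS] by (simp add: valid_asg_def)
  have "(\<lambda>b\<in>B. \<sigma> b T (restrict (h \<circ> f) A)) = restrict (h \<circ> (\<lambda>b\<in>B. \<sigma> b S f)) B"
    using \<sigma> Omega_natural[OF _ S T h f] by (intro ext) auto
  then show "subst B A \<sigma> u T (restrict (h \<circ> f) A) = h (subst B A \<sigma> u S f)"
    using valid_asg_mhom[OF T h f] vS Omega_natural[OF u S T h g] by (simp add: subst_def)
qed (simp_all add: subst_def Omega_closed[OF u valid_asg_subst[OF \<sigma>]])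

lemma subst_val:
  "valid_asg A T f \<Longrightarrow> subst B A \<sigma> u T f = u T (\<lambda>b\<in>B. \<sigma> b T f)"
  by (simp add: subst_def)

lemma subst_imult:
  "\<sigma> ` B \<subseteq> Omega A \<Longrightarrow> subst B A \<sigma> (imult B u v) = imult A (subst B A \<sigma> u) (subst B A \<sigma> v)"
  by (intro ext) (simp add: subst_def imult_def valid_asg_subst)

lemma subst_ione: "\<sigma> ` B \<subseteq> Omega A \<Longrightarrow> subst B A \<sigma> (ione B) = ione A"
  by (intro ext) (simp add: subst_def ione_def valid_asg_subst)

lemma subst_gen:
  assumes "\<sigma> ` B \<subseteq> Omega A" and "b \<in> B"
  shows "subst B A \<sigma> (gen B b) = \<sigma> b"
  by (rule Omega_eqI[OF subst_Omega[OF assms(1) gen_Omega[OF assms(2)]]])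
    (use assms in \<open>auto simp: subst_val gen_val valid_asg_subst\<close>)

lemma subst_omega:
  assumes \<sigma>: "\<sigma> ` B \<subseteq> Omega A" and u: "u \<in> Omega B"
  shows "subst B A \<sigma> (omega B u) = omega A (subst B A \<sigma> u)"
  by (rule Omega_eqI[OF subst_Omega[OF \<sigma> omega_Omega[OF u]] omega_Omega[OF subst_Omega[OF \<sigma> u]]])
    (simp add: subst_val omega_val u subst_Omega[OF \<sigma> u] valid_asg_subst[OF \<sigma>])

lemma subst_agree_on: "agree_on Ts u v \<Longrightarrow> agree_on Ts (subst B A \<sigma> u) (subst B A \<sigma> v)"
  unfolding agree_on_def subst_def by (intro ballI ext) simp

lemma cont_hom_subst:
  assumes \<sigma>: "\<sigma> ` B \<subseteq> Omega A"
  shows "cont_hom B A (subst B A \<sigma>)"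
  unfolding cont_hom_def
proof (intro conjI ballI allI)
  fix u :: "'b io" and S g
  show "\<exists>Ts\<in>fin_tests. \<forall>v\<in>Omega B.
      agree_on Ts v u \<longrightarrow> subst B A \<sigma> v S g = subst B A \<sigma> u S g"
  proof (cases "valid_asg A S g")
    case True
    then have "{S} \<in> fin_tests" by (simp add: fin_tests_def valid_asg_def)
    then show ?thesis by (intro bexI[of _ "{S}"]) (auto simp: agree_on_def subst_def)
  next
    case False
    have "{} \<in> fin_tests" by (simp add: fin_tests_def)
    then show ?thesis using False by (intro bexI[of _ "{}"]) (auto simp: subst_def)
  qed
qed (simp_all add: assms subst_Omega subst_imult subst_ione)

subsection \<open>Density of words\<close>

definition word :: "'a set \<Rightarrow> 'a list \<Rightarrow> 'a io" where
  "word A xs = foldr (\<lambda>a. imult A (gen A a)) xs (ione A)"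

lemma word_Omega: "set xs \<subseteq> A \<Longrightarrow> word A xs \<in> Omega A"
  by (induction xs) (auto simp: word_def ione_Omega imult_Omega gen_Omega)

lemma word_Cons: "word A (a # xs) = imult A (gen A a) (word A xs)"
  by (simp add: word_def)

lemma word_append:
  "set xs \<subseteq> A \<Longrightarrow> set ys \<subseteq> A \<Longrightarrow> word A (xs @ ys) = imult A (word A xs) (word A ys)"
  by (induction xs) (simp_all add: word_def imult_one_left[OF word_Omega[unfolded word_def]]
      imult_assoc gen_Omega word_Omega[unfolded word_def])

lemma word_single: "a \<in> A \<Longrightarrow> word A [a] = gen A a"
  by (simp add: word_def imult_one_right gen_Omega)

lemma finite_monoid_iso_finmon:
  fixes M :: "('c, 'd) monoid_scheme"
  assumes M: "monoid M" and fin: "finite (carrier M)"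
  obtains P h where "P \<in> finmon" and "h \<in> iso M P" and "h \<one>\<^bsub>M\<^esub> = \<one>\<^bsub>P\<^esub>"
proof -
  interpret M: monoid M by (rule M)
  obtain h :: "'c \<Rightarrow> nat" where h: "inj_on h (carrier M)"
    using finite_imp_inj_to_nat_seg[OF fin] by blast
  define g where "g = the_inv_into (carrier M) h"
  have g: "g (h x) = x" if "x \<in> carrier M" for x
    unfolding g_def using the_inv_into_f_f[OF h that] .
  define P :: "nat monoid" where
    "P = \<lparr>carrier = h ` carrier M, mult = \<lambda>x y. h (g x \<otimes>\<^bsub>M\<^esub> g y), one = h \<one>\<^bsub>M\<^esub>\<rparr>"
  have mult: "h x \<otimes>\<^bsub>P\<^esub> h y = h (x \<otimes>\<^bsub>M\<^esub> y)" if "x \<in> carrier M" "y \<in> carrier M" for x y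
    using that by (simp add: P_def g)
  have "monoid P"
    by (rule monoidI) (auto simp: P_def g M.m_assoc)
  then have "P \<in> finmon" using fin by (simp add: finmon_def P_def)
  moreover have "h \<in> iso M P"
    using h mult by (auto simp: iso_def hom_def bij_betw_def P_def)
  ultimately show ?thesis using that by (simp add: P_def)
qed

definition word_vals :: "'a set \<Rightarrow> (nat monoid \<times> ('a \<Rightarrow> nat)) set \<Rightarrow> 'a list \<Rightarrow>
    nat monoid \<times> ('a \<Rightarrow> nat) \<Rightarrow> nat" where
  "word_vals A I xs = (\<lambda>i\<in>I. word A xs (fst i) (snd i))"

definition word_monoid :: "'a set \<Rightarrow> (nat monoid \<times> ('a \<Rightarrow> nat)) set \<Rightarrow>
    (nat monoid \<times> ('a \<Rightarrow> nat) \<Rightarrow> nat) monoid" where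
  "word_monoid A I = \<lparr>carrier = word_vals A I ` {xs. set xs \<subseteq> A},
     mult = \<lambda>v w. \<lambda>i\<in>I. v i \<otimes>\<^bsub>fst i\<^esub> w i, one = word_vals A I []\<rparr>"

lemma word_monoid_mult:
  assumes "\<forall>i\<in>I. valid_asg A (fst i) (snd i)" and "set xs \<subseteq> A" and "set ys \<subseteq> A"
  shows "word_vals A I xs \<otimes>\<^bsub>word_monoid A I\<^esub> word_vals A I ys = word_vals A I (xs @ ys)"
  unfolding word_monoid_def word_vals_def
  by (intro ext) (use assms in \<open>auto simp: word_append imult_val\<close>)

lemma monoid_word_monoid:
  assumes "\<forall>i\<in>I. valid_asg A (fst i) (snd i)"
  shows "monoid (word_monoid A I)"
proof (rule monoidI)
  fix x y z
  assume "x \<in> carrier (word_monoid A I)" "y \<in> carrier (word_monoid A I)"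
    "z \<in> carrier (word_monoid A I)"
  then obtain xs ys zs where "set xs \<subseteq> A" "set ys \<subseteq> A" "set zs \<subseteq> A"
    and "x = word_vals A I xs" "y = word_vals A I ys" "z = word_vals A I zs"
    by (auto simp: word_monoid_def)
  with word_monoid_mult[OF assms] show
    "x \<otimes>\<^bsub>word_monoid A I\<^esub> y \<in> carrier (word_monoid A I)"
    "x \<otimes>\<^bsub>word_monoid A I\<^esub> y \<otimes>\<^bsub>word_monoid A I\<^esub> z =
       x \<otimes>\<^bsub>word_monoid A I\<^esub> (y \<otimes>\<^bsub>word_monoid A I\<^esub> z)"
    "\<one>\<^bsub>word_monoid A I\<^esub> \<otimes>\<^bsub>word_monoid A I\<^esub> x = x"
    "x \<otimes>\<^bsub>word_monoid A I\<^esub> \<one>\<^bsub>word_monoid A I\<^esub> = x"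
    by (auto simp: word_monoid_def image_iff intro!: exI[of _ "xs @ ys"])
qed (force simp: word_monoid_def)

lemma finite_word_monoid:
  assumes "finite I" and "\<forall>i\<in>I. valid_asg A (fst i) (snd i)"
  shows "finite (carrier (word_monoid A I))"
proof (rule finite_subset)
  show "carrier (word_monoid A I) \<subseteq> PiE I (\<lambda>i. carrier (fst i))"
    using assms(2) Omega_closed[OF word_Omega] by (fastforce simp: word_monoid_def word_vals_def)
  show "finite (PiE I (\<lambda>i. carrier (fst i)))"
    using assms by (intro finite_PiE) (auto dest!: valid_asg_finmon finmonD)
qed

lemma word_monoid_iso_projection:
  assumes I: "\<forall>i\<in>I. valid_asg A (fst i) (snd i)" and h: "h \<in> iso (word_monoid A I) P"
    and h1: "h \<one>\<^bsub>word_monoid A I\<^esub> = \<one>\<^bsub>P\<^esub>" and i: "(T, f) \<in> I"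
  defines "\<pi> \<equiv> \<lambda>x. the_inv_into (carrier (word_monoid A I)) h x (T, f)"
  shows "\<pi> \<in> mhom P T" and "\<And>ys. set ys \<subseteq> A \<Longrightarrow> \<pi> (h (word_vals A I ys)) = word A ys T f"
proof -
  let ?M = "word_monoid A I"
  have f: "valid_asg A T f" using I i by auto
  have words: "word_vals A I xs \<in> carrier ?M" if "set xs \<subseteq> A" for xs
    using that by (simp add: word_monoid_def)
  have hP: "carrier P = h ` carrier ?M" and inj: "inj_on h (carrier ?M)"
    using h by (auto simp: iso_def bij_betw_def)
  have carrierP: "\<exists>ys. set ys \<subseteq> A \<and> x = h (word_vals A I ys)" if "x \<in> carrier P" for x
    using that hP by (auto simp: word_monoid_def)
  show \<pi>: "\<pi> (h (word_vals A I ys)) = word A ys T f" if "set ys \<subseteq> A" for ys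
    using the_inv_into_f_f[OF inj words[OF that]] i by (simp add: \<pi>_def word_vals_def)
  show "\<pi> \<in> mhom P T"
    unfolding mhom_def
  proof (intro CollectI conjI ballI Pi_I)
    fix x assume "x \<in> carrier P"
    then show "\<pi> x \<in> carrier T"
      using carrierP \<pi> Omega_closed[OF word_Omega f] by force
  next
    show "\<pi> \<one>\<^bsub>P\<^esub> = \<one>\<^bsub>T\<^esub>"
      using h1 \<pi>[of "[]"] f by (simp add: word_monoid_def word_def ione_val)
  next
    fix x y assume "x \<in> carrier P" "y \<in> carrier P"
    then obtain xs ys where xs: "set xs \<subseteq> A" and ys: "set ys \<subseteq> A"
      and "x = h (word_vals A I xs)" "y = h (word_vals A I ys)"
      using carrierP by blast
    moreover have "h (word_vals A I xs) \<otimes>\<^bsub>P\<^esub> h (word_vals A I ys) = h (word_vals A I (xs @ ys))"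
      using hom_mult[OF iso_imp_homomorphism[OF h] words[OF xs] words[OF ys]] word_monoid_mult[OF I xs ys]
      by simp
    ultimately show "\<pi> (x \<otimes>\<^bsub>P\<^esub> y) = \<pi> x \<otimes>\<^bsub>T\<^esub> \<pi> y"
      using \<pi> f by (simp add: word_append imult_val)
  qed
qed

text \<open>Evaluate u in a finite monoid isomorphic to the monoid of word values at all test
  assignments, at the generators.\<close>
lemma words_dense:
  assumes A: "finite A" and u: "u \<in> Omega A" and Ts: "Ts \<in> fin_tests"
  obtains xs where "set xs \<subseteq> A" and "agree_on Ts (word A xs) u"
proof -
  define I where "I = Sigma Ts (\<lambda>T. A \<rightarrow>\<^sub>E carrier T)"
  have I: "\<forall>i\<in>I. valid_asg A (fst i) (snd i)"
    using Ts by (auto simp: I_def valid_asg_def fin_tests_def)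
  have "finite I"
    unfolding I_def using Ts A
    by (intro finite_SigmaI finite_PiE) (auto simp: fin_tests_def dest!: finmonD)
  then obtain P h where P: "P \<in> finmon" and h: "h \<in> iso (word_monoid A I) P"
    and h1: "h \<one>\<^bsub>word_monoid A I\<^esub> = \<one>\<^bsub>P\<^esub>"
    using finite_monoid_iso_finmon[OF monoid_word_monoid finite_word_monoid] I by metis
  have hP: "carrier P = h ` carrier (word_monoid A I)"
    using h by (auto simp: iso_def bij_betw_def)
  define F where "F = (\<lambda>a\<in>A. h (word_vals A I [a]))"
  have F: "F \<in> A \<rightarrow>\<^sub>E carrier P"
    using hP by (auto simp: F_def word_monoid_def)
  then have "u P F \<in> carrier P" using P by (intro Omega_closed[OF u] valid_asgI)
  then obtain xs where xs: "set xs \<subseteq> A" and uP: "u P F = h (word_vals A I xs)"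
    using hP by (auto simp: word_monoid_def)
  have "u T f = word A xs T f" if T: "T \<in> Ts" and f: "valid_asg A T f" for T f
  proof -
    have "(T, f) \<in> I" using that by (auto simp: I_def valid_asg_def)
    note \<pi> = word_monoid_iso_projection[OF I h h1 this]
    let ?\<pi> = "\<lambda>x. the_inv_into (carrier (word_monoid A I)) h x (T, f)"
    have "restrict (?\<pi> \<circ> F) A = f"
    proof (rule extensionalityI[OF restrict_extensional])
      show "f \<in> extensional A" using f by (simp add: valid_asg_def PiE_iff)
      fix a assume a: "a \<in> A"
      then have "?\<pi> (F a) = word A [a] T f" by (simp add: F_def \<pi>(2))
      then show "restrict (?\<pi> \<circ> F) A a = f a" using a f by (simp add: word_single gen_val)
    qed
    then have "u T f = ?\<pi> (u P F)"
      using Omega_natural[OF u P valid_asg_finmon[OF f] \<pi>(1) F] by simp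
    then show ?thesis using uP \<pi>(2)[OF xs] by simp
  qed
  then have "agree_on Ts (word A xs) u"
    unfolding agree_on_def
  proof (intro ballI ext)
    fix T f assume "T \<in> Ts" "\<And>T f. T \<in> Ts \<Longrightarrow> valid_asg A T f \<Longrightarrow> u T f = word A xs T f"
    then show "word A xs T f = u T f"
      using Omega_undefined[OF u] Omega_undefined[OF word_Omega[OF xs]]
      by (cases "valid_asg A T f") auto
  qed
  with xs that show ?thesis by blast
qed

subsection \<open>Provability\<close>

definition Omega_context :: "'a set \<Rightarrow> 'a io option list \<Rightarrow> bool" where
  "Omega_context A c \<longleftrightarrow> (\<forall>w. Some w \<in> set c \<longrightarrow> w \<in> Omega A)"

text \<open>The type of pseudoidentities does not force their sides to be implicit operations.\<close>
definition wf_pseudoids :: "'b pseudoid set \<Rightarrow> bool" where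
  "wf_pseudoids \<Sigma> \<longleftrightarrow> (\<forall>(B, u, v)\<in>\<Sigma>. u \<in> Omega B \<and> v \<in> Omega B)"

lemma wf_pseudoidsD: "wf_pseudoids \<Sigma> \<Longrightarrow> (B, u, v) \<in> \<Sigma> \<Longrightarrow> u \<in> Omega B \<and> v \<in> Omega B"
  unfolding wf_pseudoids_def by blast

lemma cont_hom_Omega: "cont_hom B A \<phi> \<Longrightarrow> u \<in> Omega B \<Longrightarrow> \<phi> u \<in> Omega A"
  by (simp add: cont_hom_def)

lemma ifill_Cons: "ifill A (x # c) X = imult A (case_option X id x) (ifill A c X)"
  by (simp add: ifill_def)

lemma ifill_Omega: "X \<in> Omega A \<Longrightarrow> Omega_context A c \<Longrightarrow> ifill A c X \<in> Omega A"
proof (induction c)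
  case (Cons x c)
  then show ?case by (cases x) (simp_all add: ifill_Cons Omega_context_def imult_Omega)
qed (simp add: ifill_def ione_Omega)

lemma ifill_append:
  assumes X: "X \<in> Omega A" and "Omega_context A c1" and c2: "Omega_context A c2"
  shows "ifill A (c1 @ c2) X = imult A (ifill A c1 X) (ifill A c2 X)"
  using assms(2)
proof (induction c1)
  case Nil
  then show ?case using imult_one_left[OF ifill_Omega[OF X c2]] by (simp add: ifill_def)
next
  case (Cons x c1)
  then have x: "case_option X id x \<in> Omega A" and c1: "Omega_context A c1"
    using X by (auto simp: Omega_context_def split: option.split)
  have "ifill A ((x # c1) @ c2) X = imult A (case_option X id x) (imult A (ifill A c1 X) (ifill A c2 X))"
    using Cons.IH[OF c1] by (simp add: ifill_Cons)
  also have "\<dots> = imult A (ifill A (x # c1) X) (ifill A c2 X)"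
    using imult_assoc[OF x ifill_Omega[OF X c1] ifill_Omega[OF X c2]] by (simp add: ifill_Cons)
  finally show ?case .
qed

lemma ifill_None: "X \<in> Omega A \<Longrightarrow> ifill A [None] X = X"
  by (simp add: ifill_def imult_one_right)

lemma ifill_Some: "x \<in> Omega A \<Longrightarrow> ifill A [Some x] X = x"
  by (simp add: ifill_def imult_one_right)

lemma Sigma0I:
  "(B, u, v) \<in> \<Sigma> \<or> (B, v, u) \<in> \<Sigma> \<Longrightarrow> cont_hom B A \<phi> \<Longrightarrow> Omega_context A c \<Longrightarrow>
   (ifill A c (\<phi> u), ifill A c (\<phi> v)) \<in> Sigma0 A \<Sigma>"
  unfolding Sigma0_def Omega_context_def
  by (rule CollectI, rule exI[of _ c], rule exI[of _ \<phi>], rule exI[of _ B], rule exI[of _ u],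
      rule exI[of _ v]) simp

lemma Sigma0E:
  assumes "(x, y) \<in> Sigma0 A \<Sigma>"
  obtains B u v \<phi> c where "(B, u, v) \<in> \<Sigma> \<or> (B, v, u) \<in> \<Sigma>" and "cont_hom B A \<phi>"
    and "Omega_context A c" and "x = ifill A c (\<phi> u)" and "y = ifill A c (\<phi> v)"
proof -
  from assms have "\<exists>c \<phi> B u v. (x, y) = (ifill A c (\<phi> u), ifill A c (\<phi> v)) \<and>
    ((B, u, v) \<in> \<Sigma> \<or> (B, v, u) \<in> \<Sigma>) \<and> cont_hom B A \<phi> \<and> Omega_context A c"
    unfolding Sigma0_def Omega_context_def by (simp only: mem_Collect_eq)
  then show ?thesis using that by (elim exE conjE) simp
qed

lemma Sigma0_sym:
  assumes "(x, y) \<in> Sigma0 A \<Sigma>"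
  shows "(y, x) \<in> Sigma0 A \<Sigma>"
  using assms
proof (rule Sigma0E)
  fix B u v \<phi> c
  assume "(B, u, v) \<in> \<Sigma> \<or> (B, v, u) \<in> \<Sigma>" "cont_hom B A \<phi>" "Omega_context A c"
    "x = ifill A c (\<phi> u)" "y = ifill A c (\<phi> v)"
  then show ?thesis using Sigma0I[of B v u \<Sigma> A \<phi> c] by (simp add: disj_commute)
qed

lemma Sigma0_Omega:
  assumes "wf_pseudoids \<Sigma>" and "(x, y) \<in> Sigma0 A \<Sigma>"
  shows "x \<in> Omega A \<and> y \<in> Omega A"
  using assms(2)
proof (rule Sigma0E)
  fix B u v \<phi> c
  assume "(B, u, v) \<in> \<Sigma> \<or> (B, v, u) \<in> \<Sigma>" "cont_hom B A \<phi>" "Omega_context A c"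
    "x = ifill A c (\<phi> u)" "y = ifill A c (\<phi> v)"
  moreover have "\<phi> u \<in> Omega A" "\<phi> v \<in> Omega A"
    using calculation(1,2) wf_pseudoidsD[OF assms(1)] cont_hom_Omega by blast+
  ultimately show ?thesis by (simp add: ifill_Omega)
qed

text \<open>The context c is extended by p on the left and q on the right.\<close>
lemma Sigma0_mult_context:
  assumes wf: "wf_pseudoids \<Sigma>" and xy: "(x, y) \<in> Sigma0 A \<Sigma>"
    and p: "p \<in> Omega A" and q: "q \<in> Omega A"
  shows "(imult A p (imult A x q), imult A p (imult A y q)) \<in> Sigma0 A \<Sigma>"
  using xy
proof (rule Sigma0E)
  fix B u v \<phi> c
  assume uv: "(B, u, v) \<in> \<Sigma> \<or> (B, v, u) \<in> \<Sigma>" and \<phi>: "cont_hom B A \<phi>"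
    and c: "Omega_context A c" and x: "x = ifill A c (\<phi> u)" and y: "y = ifill A c (\<phi> v)"
  let ?c = "Some p # c @ [Some q]"
  have q': "Omega_context A [Some q]" using q by (simp add: Omega_context_def)
  have "ifill A ?c X = imult A p (imult A (ifill A c X) q)" if "X \<in> Omega A" for X
    using ifill_append[OF that c q'] ifill_Some[OF q] by (simp add: ifill_Cons)
  moreover have "\<phi> u \<in> Omega A" "\<phi> v \<in> Omega A"
    using uv wf_pseudoidsD[OF wf] cont_hom_Omega[OF \<phi>] by blast+
  moreover have "Omega_context A ?c" using c p q by (auto simp: Omega_context_def)
  ultimately show ?thesis using Sigma0I[OF uv \<phi>] x y by metis
qed

lemma provable_least:
  "Sigma0 A \<Sigma> \<subseteq> R \<Longrightarrow> trans R \<Longrightarrow> tclosure A R \<subseteq> R \<Longrightarrow> provable A \<Sigma> \<subseteq> R"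
  unfolding provable_def by blast

lemma Sigma0_provable: "Sigma0 A \<Sigma> \<subseteq> provable A \<Sigma>"
  unfolding provable_def by blast

lemma trans_provable: "trans (provable A \<Sigma>)"
  unfolding provable_def trans_def by blast

lemma tclosure_mono: "R \<subseteq> R' \<Longrightarrow> tclosure A R \<subseteq> tclosure A R'"
  unfolding tclosure_def by blast

lemma tclosure_provable: "tclosure A (provable A \<Sigma>) \<subseteq> provable A \<Sigma>"
proof -
  have "tclosure A (provable A \<Sigma>) \<subseteq> R"
    if "Sigma0 A \<Sigma> \<subseteq> R" "trans R" "tclosure A R \<subseteq> R" for R
    using tclosure_mono[OF provable_least[OF that]] that(3) by blast
  then show ?thesis unfolding provable_def by blast
qed

lemma provable_approx:
  assumes "s \<in> Omega A" and "t \<in> Omega A"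
    and "\<And>Ts. Ts \<in> fin_tests \<Longrightarrow>
      \<exists>s' t'. (s', t') \<in> provable A \<Sigma> \<and> agree_on Ts s' s \<and> agree_on Ts t' t"
  shows "(s, t) \<in> provable A \<Sigma>"
  using assms tclosure_provable unfolding tclosure_def by blast

lemma provable_Omega:
  "wf_pseudoids \<Sigma> \<Longrightarrow> (x, y) \<in> provable A \<Sigma> \<Longrightarrow> x \<in> Omega A \<and> y \<in> Omega A"
  using provable_least[of A \<Sigma> "Omega A \<times> Omega A"] Sigma0_Omega
  unfolding trans_def tclosure_def by fast

lemma provable_sym:
  assumes "(x, y) \<in> provable A \<Sigma>"
  shows "(y, x) \<in> provable A \<Sigma>"
proof -
  have "provable A \<Sigma> \<subseteq> (provable A \<Sigma>)\<inverse>"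
  proof (rule provable_least)
    show "Sigma0 A \<Sigma> \<subseteq> (provable A \<Sigma>)\<inverse>"
      using Sigma0_sym Sigma0_provable by fast
    show "trans ((provable A \<Sigma>)\<inverse>)"
      using trans_provable unfolding trans_def by blast
    show "tclosure A ((provable A \<Sigma>)\<inverse>) \<subseteq> (provable A \<Sigma>)\<inverse>"
      using tclosure_provable unfolding tclosure_def by fast
  qed
  then show ?thesis using assms by blast
qed

text \<open>The pairs all of whose two-sided translates are provable contain the instances of \<Sigma>
  and form a transitive, closed relation.\<close>
lemma provable_mult_context:
  assumes wf: "wf_pseudoids \<Sigma>" and xy: "(x, y) \<in> provable A \<Sigma>"
    and p: "p \<in> Omega A" and q: "q \<in> Omega A"
  shows "(imult A p (imult A x q), imult A p (imult A y q)) \<in> provable A \<Sigma>"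
proof -
  let ?R = "{(x, y). \<forall>p\<in>Omega A. \<forall>q\<in>Omega A.
    (imult A p (imult A x q), imult A p (imult A y q)) \<in> provable A \<Sigma>}"
  have "provable A \<Sigma> \<subseteq> ?R"
  proof (rule provable_least)
    show "Sigma0 A \<Sigma> \<subseteq> ?R"
      using Sigma0_mult_context[OF wf] Sigma0_provable by fast
    show "trans ?R"
      using trans_provable unfolding trans_def by fast
    show "tclosure A ?R \<subseteq> ?R"
    proof safe
      fix x y p q assume xy: "(x, y) \<in> tclosure A ?R" and p: "p \<in> Omega A" and q: "q \<in> Omega A"
      show "(imult A p (imult A x q), imult A p (imult A y q)) \<in> provable A \<Sigma>"
      proof (rule provable_approx)
        show "imult A p (imult A x q) \<in> Omega A" "imult A p (imult A y q) \<in> Omega A"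
          using xy p q by (auto simp: tclosure_def intro!: imult_Omega)
      next
        fix Ts assume "Ts \<in> fin_tests"
        then obtain x' y' where "(x', y') \<in> ?R" "agree_on Ts x' x" "agree_on Ts y' y"
          using xy unfolding tclosure_def by blast
        then show "\<exists>s' t'. (s', t') \<in> provable A \<Sigma> \<and>
            agree_on Ts s' (imult A p (imult A x q)) \<and> agree_on Ts t' (imult A p (imult A y q))"
          using p q by (blast intro: agree_on_imult agree_on_refl)
      qed
    qed
  qed
  then show ?thesis using xy p q by blast
qed

lemma provable_instance:
  assumes "wf_pseudoids \<Sigma>" and "(B, u, v) \<in> \<Sigma>" and "cont_hom B A \<phi>"
  shows "(\<phi> u, \<phi> v) \<in> provable A \<Sigma>"
proof -
  have "\<phi> u \<in> Omega A" "\<phi> v \<in> Omega A"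
    using wf_pseudoidsD[OF assms(1,2)] cont_hom_Omega[OF assms(3)] by blast+
  then show ?thesis
    using Sigma0I[of B u v \<Sigma> A \<phi> "[None]"] assms(2,3) Sigma0_provable
    by (auto simp: Omega_context_def ifill_None)
qed

text \<open>(x, x) is the instance of any pseudoidentity of \<Sigma> in the context consisting of x alone.\<close>
lemma provable_refl:
  assumes "(B, u, v) \<in> \<Sigma>" and x: "x \<in> Omega A"
  shows "(x, x) \<in> provable A \<Sigma>"
proof -
  have "cont_hom B A (subst B A (\<lambda>_. ione A))"
    using ione_Omega by (intro cont_hom_subst) blast
  then show ?thesis
    using Sigma0I[of B u v \<Sigma>, of A _ "[Some x]"] assms Sigma0_provable
    by (force simp: Omega_context_def ifill_Some)
qed

lemma provable_mult:
  assumes wf: "wf_pseudoids \<Sigma>" and xx': "(x, x') \<in> provable A \<Sigma>" and yy': "(y, y') \<in> provable A \<Sigma>"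
  shows "(imult A x y, imult A x' y') \<in> provable A \<Sigma>"
proof -
  have "x \<in> Omega A" "x' \<in> Omega A" "y \<in> Omega A" "y' \<in> Omega A"
    using provable_Omega[OF wf] xx' yy' by blast+
  then have "(imult A x y, imult A x' y) \<in> provable A \<Sigma>" "(imult A x' y, imult A x' y') \<in> provable A \<Sigma>"
    using provable_mult_context[OF wf xx' ione_Omega, of y] provable_mult_context[OF wf yy' _ ione_Omega, of x']
    by (simp_all add: imult_one_left imult_one_right imult_Omega)
  then show ?thesis using trans_provable by (blast dest: transD)
qed

subsection \<open>The pseudoidentity x\<omega> = 1\<close>

lemma wf_eps_omega: "wf_pseudoids {eps_omega}"
  by (simp add: wf_pseudoids_def eps_omega_def omega_Omega gen_Omega ione_Omega)

lemma eps_omega_provable_refl: "x \<in> Omega A \<Longrightarrow> (x, x) \<in> provable A {eps_omega}"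
  by (rule provable_refl[of UNIV "omega UNIV (gen UNIV ())" "ione UNIV"]) (simp_all add: eps_omega_def)

lemma omega_provable_one:
  assumes u: "u \<in> Omega A"
  shows "(omega A u, ione A) \<in> provable A {eps_omega}"
proof -
  have \<sigma>: "(\<lambda>_. u) ` (UNIV :: unit set) \<subseteq> Omega A" using u by blast
  have "(subst UNIV A (\<lambda>_. u) (omega UNIV (gen UNIV ())), subst UNIV A (\<lambda>_. u) (ione (UNIV :: unit set)))
      \<in> provable A {eps_omega}"
    using provable_instance[OF wf_eps_omega _ cont_hom_subst[OF \<sigma>]] by (simp add: eps_omega_def)
  then show ?thesis by (simp add: subst_omega[OF \<sigma>] subst_gen[OF \<sigma>] subst_ione[OF \<sigma>] gen_Omega)
qed

lemma cont_hom_fin_ipow: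
  assumes \<psi>: "cont_hom_fin B H \<psi>" and u: "u \<in> Omega B" and H: "monoid H"
  shows "\<psi> (ipow B u n) = \<psi> u [^]\<^bsub>H\<^esub> n"
proof (induction n)
  case (Suc n)
  have "\<psi> (ipow B u (Suc n)) = \<psi> u \<otimes>\<^bsub>H\<^esub> \<psi> (ipow B u n)"
    using \<psi> u ipow_Omega[OF u] by (simp add: ipow_def cont_hom_fin_def)
  then show ?case using Suc monoid.nat_pow_Suc2[OF H, of "\<psi> u" n] \<psi> u by (simp add: cont_hom_fin_def)
qed (use \<psi> in \<open>simp add: ipow_def cont_hom_fin_def\<close>)

text \<open>In a finite group the only idempotent is 1, so x\<omega> = 1 holds; the value of a continuous
  \<psi> at x\<omega> is read off at a large enough factorial power.\<close>
lemma finite_group_models_eps_omega: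
  assumes H: "group H" and fin: "finite (carrier H)"
  shows "H \<in> models {eps_omega}"
proof -
  have m: "monoid H" using H by (rule group.is_monoid)
  have g: "gen UNIV () \<in> Omega (UNIV :: unit set)" by (rule gen_Omega) simp
  have "\<psi> (omega UNIV (gen UNIV ())) = \<psi> (ione UNIV)" if \<psi>: "cont_hom_fin (UNIV :: unit set) H \<psi>" for \<psi>
  proof -
    obtain Ts where Ts: "Ts \<in> fin_tests"
      and cont: "\<forall>v\<in>Omega UNIV. agree_on Ts v (omega UNIV (gen UNIV ())) \<longrightarrow>
        \<psi> v = \<psi> (omega UNIV (gen UNIV ()))"
      using \<psi> omega_Omega[OF g] unfolding cont_hom_fin_def by blast
    have "\<forall>\<^sub>F n in sequentially. agree_on Ts (ipow UNIV (gen UNIV ()) (fact n)) (omega UNIV (gen UNIV ()))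
        \<and> card (carrier H) \<le> n"
      using ipow_fact_converges_omega[OF g Ts] eventually_ge_at_top[of "card (carrier H)"]
      by (simp add: eventually_conj)
    then obtain n where n: "agree_on Ts (ipow UNIV (gen UNIV ()) (fact n)) (omega UNIV (gen UNIV ()))"
      and "card (carrier H) \<le> n"
      unfolding eventually_sequentially by blast
    define p where "p = \<psi> (gen UNIV ()) [^]\<^bsub>H\<^esub> (fact n :: nat)"
    have x: "\<psi> (gen UNIV ()) \<in> carrier H" using \<psi> g by (simp add: cont_hom_fin_def)
    then have "p \<in> carrier H" "p \<otimes>\<^bsub>H\<^esub> p = p"
      using monoid.fact_pow_idempotent[OF m fin x \<open>card (carrier H) \<le> n\<close>] m
      by (simp_all add: p_def monoid.nat_pow_closed)
    then have "p = \<one>\<^bsub>H\<^esub>" using group.l_cancel_one[OF H] by simp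
    moreover have "\<psi> (omega UNIV (gen UNIV ())) = \<psi> (ipow UNIV (gen UNIV ()) (fact n))"
      using cont ipow_Omega[OF g] n by simp
    then have "\<psi> (omega UNIV (gen UNIV ())) = p"
      unfolding p_def cont_hom_fin_ipow[OF \<psi> g m] .
    ultimately show ?thesis using \<psi> by (simp add: cont_hom_fin_def)
  qed
  then show ?thesis
    using m fin by (simp add: models_def holds_in_def eps_omega_def finmon_def)
qed

subsection \<open>Evaluation in the maximal subgroup at an idempotent\<close>

definition local_monoid :: "nat monoid \<Rightarrow> nat \<Rightarrow> nat monoid" where
  "local_monoid T e =
     \<lparr>carrier = {y \<in> carrier T. e \<otimes>\<^bsub>T\<^esub> y = y \<and> y \<otimes>\<^bsub>T\<^esub> e = y}, mult = mult T, one = e\<rparr>"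

lemma local_monoid_mult_closed:
  assumes "monoid T" and e: "e \<in> carrier T"
    and x: "x \<in> carrier (local_monoid T e)" and y: "y \<in> carrier (local_monoid T e)"
  shows "x \<otimes>\<^bsub>T\<^esub> y \<in> carrier (local_monoid T e)"
proof -
  interpret monoid T by fact
  have "x \<in> carrier T" "y \<in> carrier T" "e \<otimes>\<^bsub>T\<^esub> x = x" "y \<otimes>\<^bsub>T\<^esub> e = y"
    using x y by (auto simp: local_monoid_def)
  then have "e \<otimes>\<^bsub>T\<^esub> (x \<otimes>\<^bsub>T\<^esub> y) = x \<otimes>\<^bsub>T\<^esub> y" "(x \<otimes>\<^bsub>T\<^esub> y) \<otimes>\<^bsub>T\<^esub> e = x \<otimes>\<^bsub>T\<^esub> y"
    using e by (simp_all add: m_assoc[symmetric]) (simp add: m_assoc)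
  with \<open>x \<in> carrier T\<close> \<open>y \<in> carrier T\<close> show ?thesis by (simp add: local_monoid_def)
qed

lemma conj_in_local_monoid:
  assumes "monoid T" and e: "e \<in> carrier T" "e \<otimes>\<^bsub>T\<^esub> e = e" and x: "x \<in> carrier T"
  shows "e \<otimes>\<^bsub>T\<^esub> (x \<otimes>\<^bsub>T\<^esub> e) \<in> carrier (local_monoid T e)"
proof -
  interpret monoid T by fact
  have "e \<otimes>\<^bsub>T\<^esub> (e \<otimes>\<^bsub>T\<^esub> (x \<otimes>\<^bsub>T\<^esub> e)) = e \<otimes>\<^bsub>T\<^esub> (x \<otimes>\<^bsub>T\<^esub> e)"
    "e \<otimes>\<^bsub>T\<^esub> (x \<otimes>\<^bsub>T\<^esub> e) \<otimes>\<^bsub>T\<^esub> e = e \<otimes>\<^bsub>T\<^esub> (x \<otimes>\<^bsub>T\<^esub> e)"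
    using e x by (simp add: m_assoc[symmetric], simp add: m_assoc)
  then show ?thesis using e x by (simp add: local_monoid_def)
qed

lemma monoid_local_monoid:
  assumes T: "monoid T" and e: "e \<in> carrier T" "e \<otimes>\<^bsub>T\<^esub> e = e"
  shows "monoid (local_monoid T e)"
proof (rule monoidI)
  fix x y z assume "x \<in> carrier (local_monoid T e)" "y \<in> carrier (local_monoid T e)"
    "z \<in> carrier (local_monoid T e)"
  then show "x \<otimes>\<^bsub>local_monoid T e\<^esub> y \<in> carrier (local_monoid T e)"
    "x \<otimes>\<^bsub>local_monoid T e\<^esub> y \<otimes>\<^bsub>local_monoid T e\<^esub> z =
     x \<otimes>\<^bsub>local_monoid T e\<^esub> (y \<otimes>\<^bsub>local_monoid T e\<^esub> z)"
    using local_monoid_mult_closed[OF T e(1)] by (auto simp: local_monoid_def monoid.m_assoc[OF T])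
qed (use e in \<open>auto simp: local_monoid_def\<close>)

lemma local_monoid_nat_pow:
  assumes "monoid T" and y: "y \<in> carrier (local_monoid T e)" and "n \<ge> 1"
  shows "y [^]\<^bsub>local_monoid T e\<^esub> n = y [^]\<^bsub>T\<^esub> (n::nat)"
  using assms(3)
proof (induction n)
  case (Suc n)
  then show ?case
    using y monoid.l_one[OF assms(1)] by (cases "n = 0") (auto simp: local_monoid_def)
qed simp

definition local_monoid_one :: "nat monoid \<Rightarrow> nat \<Rightarrow> nat monoid" where
  "local_monoid_one T e = T\<lparr>carrier := insert \<one>\<^bsub>T\<^esub> (carrier (local_monoid T e))\<rparr>"

lemma local_monoid_subset: "carrier (local_monoid T e) \<subseteq> carrier T"
  by (auto simp: local_monoid_def)

lemma monoid_local_monoid_one: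
  assumes mT: "monoid T" and e: "e \<in> carrier T"
  shows "monoid (local_monoid_one T e)"
  unfolding local_monoid_one_def
proof (rule submonoid.submonoid_is_monoid[OF _ mT], rule submonoid.intro)
  show "insert \<one>\<^bsub>T\<^esub> (carrier (local_monoid T e)) \<subseteq> carrier T"
    using local_monoid_subset monoid.one_closed[OF mT] by simp
  show "\<one>\<^bsub>T\<^esub> \<in> insert \<one>\<^bsub>T\<^esub> (carrier (local_monoid T e))" by simp
  fix x y
  assume "x \<in> insert \<one>\<^bsub>T\<^esub> (carrier (local_monoid T e))" "y \<in> insert \<one>\<^bsub>T\<^esub> (carrier (local_monoid T e))"
  then show "x \<otimes>\<^bsub>T\<^esub> y \<in> insert \<one>\<^bsub>T\<^esub> (carrier (local_monoid T e))"
    using local_monoid_mult_closed[OF mT e] local_monoid_subset[of T e] monoid.l_one[OF mT]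
      monoid.r_one[OF mT] monoid.one_closed[OF mT]
    by (cases "x = \<one>\<^bsub>T\<^esub>"; cases "y = \<one>\<^bsub>T\<^esub>") auto
qed

lemma mhom_local_monoid_one:
  assumes mT: "monoid T" and e: "e \<in> carrier T" "e \<otimes>\<^bsub>T\<^esub> e = e"
  shows "(\<lambda>x. e \<otimes>\<^bsub>T\<^esub> x) \<in> mhom (local_monoid_one T e) (local_monoid T e)"
  unfolding mhom_def
proof (intro CollectI conjI ballI Pi_I)
  interpret T: monoid T by (rule mT)
  fix x y assume x: "x \<in> carrier (local_monoid_one T e)" and y: "y \<in> carrier (local_monoid_one T e)"
  have "x \<in> carrier T" "y \<in> carrier T"
    using x y local_monoid_subset by (auto simp: local_monoid_one_def)
  have ex: "e \<otimes>\<^bsub>T\<^esub> x = (if x = \<one>\<^bsub>T\<^esub> then e else x)" and xe: "x \<otimes>\<^bsub>T\<^esub> e = (if x = \<one>\<^bsub>T\<^esub> then e else x)"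
    using x e by (auto simp: local_monoid_one_def local_monoid_def)
  then show "e \<otimes>\<^bsub>T\<^esub> x \<in> carrier (local_monoid T e)"
    using x e by (auto simp: local_monoid_one_def local_monoid_def)
  have "e \<otimes>\<^bsub>T\<^esub> x \<otimes>\<^bsub>T\<^esub> e = e \<otimes>\<^bsub>T\<^esub> x"
    using xe e \<open>x \<in> carrier T\<close> by (cases "x = \<one>\<^bsub>T\<^esub>") (simp_all add: T.m_assoc)
  then show "e \<otimes>\<^bsub>T\<^esub> (x \<otimes>\<^bsub>local_monoid_one T e\<^esub> y) =
      (e \<otimes>\<^bsub>T\<^esub> x) \<otimes>\<^bsub>local_monoid T e\<^esub> (e \<otimes>\<^bsub>T\<^esub> y)"
    using e \<open>x \<in> carrier T\<close> \<open>y \<in> carrier T\<close>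
    by (simp add: local_monoid_one_def local_monoid_def T.m_assoc[symmetric])
qed (simp add: local_monoid_one_def local_monoid_def e monoid.r_one[OF mT])

text \<open>Naturality along the inclusion of eTe \<union> {1} into T and its retraction x \<mapsto> e x onto eTe.\<close>
lemma Omega_local_monoid:
  assumes u: "u \<in> Omega A" and T: "T \<in> finmon" and e: "e \<in> carrier T" "e \<otimes>\<^bsub>T\<^esub> e = e"
    and g: "g \<in> A \<rightarrow>\<^sub>E carrier (local_monoid T e)"
  shows "e \<otimes>\<^bsub>T\<^esub> u T g = u (local_monoid T e) g"
proof -
  have mT: "monoid T" and fin: "finite (carrier T)" using finmonD[OF T] by auto
  have T1: "local_monoid_one T e \<in> finmon"
    using monoid_local_monoid_one[OF mT e(1)] local_monoid_subset fin monoid.one_closed[OF mT]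
    by (auto simp: finmon_def local_monoid_one_def intro: finite_subset)
  have L: "local_monoid T e \<in> finmon"
    using monoid_local_monoid[OF mT e] local_monoid_subset fin
    by (auto simp: finmon_def intro: finite_subset)
  have g1: "g \<in> A \<rightarrow>\<^sub>E carrier (local_monoid_one T e)" using g by (auto simp: local_monoid_one_def)
  have "(\<lambda>x. x) \<in> mhom (local_monoid_one T e) T"
    using local_monoid_subset monoid.one_closed[OF mT] by (auto simp: mhom_def local_monoid_one_def)
  moreover have "restrict ((\<lambda>x. x) \<circ> g) A = g"
    unfolding comp_def using PiE_restrict[OF g] by simp
  ultimately have "u T g = u (local_monoid_one T e) g" using Omega_natural[OF u T1 T _ g1] by metis
  moreover have "restrict ((\<lambda>x. e \<otimes>\<^bsub>T\<^esub> x) \<circ> g) A = g"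
    using g by (auto simp: local_monoid_def PiE_iff extensional_def)
  ultimately show ?thesis
    using Omega_natural[OF u T1 L mhom_local_monoid_one[OF mT e] g1] by metis
qed

lemma conj_in_local_Units:
  assumes T: "T \<in> finmon" and e: "e \<in> carrier T" "e \<otimes>\<^bsub>T\<^esub> e = e" and x: "x \<in> carrier T"
    and "idem_pow T (e \<otimes>\<^bsub>T\<^esub> (x \<otimes>\<^bsub>T\<^esub> e)) = e"
  shows "e \<otimes>\<^bsub>T\<^esub> (x \<otimes>\<^bsub>T\<^esub> e) \<in> Units (local_monoid T e)"
proof -
  have mT: "monoid T" using finmonD[OF T] by blast
  have y: "e \<otimes>\<^bsub>T\<^esub> (x \<otimes>\<^bsub>T\<^esub> e) \<in> carrier (local_monoid T e)"
    by (rule conj_in_local_monoid[OF mT e x])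
  moreover have "(e \<otimes>\<^bsub>T\<^esub> (x \<otimes>\<^bsub>T\<^esub> e)) [^]\<^bsub>local_monoid T e\<^esub> (fact (card (carrier T)) :: nat) =
      \<one>\<^bsub>local_monoid T e\<^esub>"
    using local_monoid_nat_pow[OF mT y fact_ge_1] assms(5)
    by (simp add: idem_pow_def) (simp add: local_monoid_def)
  ultimately show ?thesis
    using monoid.nat_pow_eq_one_Units[OF monoid_local_monoid[OF mT e]] fact_ge_1 by blast
qed

lemma cont_hom_fin_eval:
  "H \<in> finmon \<Longrightarrow> g \<in> A \<rightarrow>\<^sub>E carrier H \<Longrightarrow> cont_hom_fin A H (\<lambda>u. u H g)"
  unfolding cont_hom_fin_def
  by (auto simp: Omega_closed valid_asgI imult_val ione_val agree_on_def fin_tests_def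
      intro!: bexI[of _ "{H}"])

text \<open>The conjugated generators e f(a) e lie in the maximal subgroup at e, a finite group,
  where every consequence of x\<omega> = 1 holds.\<close>
lemma consequence_at_local_group:
  assumes T: "T \<in> finmon" and f: "f \<in> A \<rightarrow>\<^sub>E carrier T"
    and e: "e \<in> carrier T" "e \<otimes>\<^bsub>T\<^esub> e = e"
    and absorb: "\<forall>a\<in>A. idem_pow T (e \<otimes>\<^bsub>T\<^esub> (f a \<otimes>\<^bsub>T\<^esub> e)) = e"
    and s: "s \<in> Omega A" and t: "t \<in> Omega A"
    and st: "\<forall>H\<in>models {eps_omega}. holds_in H (A, s, t)"
  shows "e \<otimes>\<^bsub>T\<^esub> s T (\<lambda>a\<in>A. e \<otimes>\<^bsub>T\<^esub> (f a \<otimes>\<^bsub>T\<^esub> e)) =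
    e \<otimes>\<^bsub>T\<^esub> t T (\<lambda>a\<in>A. e \<otimes>\<^bsub>T\<^esub> (f a \<otimes>\<^bsub>T\<^esub> e))"
proof -
  define L where "L = local_monoid T e"
  define g where "g = (\<lambda>a\<in>A. e \<otimes>\<^bsub>T\<^esub> (f a \<otimes>\<^bsub>T\<^esub> e))"
  have mT: "monoid T" and fin: "finite (carrier T)" using finmonD[OF T] by auto
  have mL: "monoid L" unfolding L_def by (rule monoid_local_monoid[OF mT e])
  have finU: "finite (Units L)"
    using fin by (rule finite_subset[rotated]) (auto simp: L_def local_monoid_def Units_def)
  have U: "units_of L \<in> finmon"
    using monoid.units_group[OF mL] finU by (simp add: finmon_def group.is_monoid units_of_carrier)
  have gU: "g \<in> A \<rightarrow>\<^sub>E carrier (units_of L)"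
    using conj_in_local_Units[OF T e] f absorb by (auto simp: g_def L_def units_of_carrier)
  then have gL: "g \<in> A \<rightarrow>\<^sub>E carrier L"
    using monoid.Units_closed[OF mL] by (auto simp: units_of_carrier)
  have "holds_in (units_of L) (A, s, t)"
    using st finite_group_models_eps_omega[OF monoid.units_group[OF mL]] finU
    by (simp add: units_of_carrier)
  then have "s (units_of L) g = t (units_of L) g"
    using cont_hom_fin_eval[OF U gU] unfolding holds_in_def prod.case
    by (drule_tac x = "\<lambda>u. u (units_of L) g" in spec) simp
  moreover have "u L g = u (units_of L) g" if "u \<in> Omega A" for u
  proof -
    have "(\<lambda>x. x) \<in> mhom (units_of L) L"
      using monoid.Units_closed[OF mL] by (auto simp: mhom_def units_of_def)
    moreover have "L \<in> finmon"
      using mL fin by (auto simp: finmon_def L_def local_monoid_def)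
    moreover have "restrict ((\<lambda>x. x) \<circ> g) A = g"
      unfolding comp_def using PiE_restrict[OF gU] by simp
    ultimately show ?thesis using Omega_natural[OF that U] gU by metis
  qed
  moreover have "e \<otimes>\<^bsub>T\<^esub> u T g = u L g" if "u \<in> Omega A" for u
    using Omega_local_monoid[OF that T e] gL by (simp add: L_def)
  ultimately have "e \<otimes>\<^bsub>T\<^esub> s T g = e \<otimes>\<^bsub>T\<^esub> t T g" using s t by metis
  then show ?thesis by (simp add: g_def)
qed

subsection \<open>An idempotent absorbing all generators\<close>

lemma funpow_fixed_from:
  assumes "F ((F ^^ i) x) = (F ^^ i) x" and "i \<le> n"
  shows "(F ^^ n) x = (F ^^ i) x"
  using assms(2)
proof (induction n)
  case (Suc n)
  then show ?case
    using assms(1) by (cases "i = Suc n") (simp_all add: le_Suc_eq)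
qed simp
lemma funpow_descending_stabilizes:
  assumes fin: "finite S" and x: "x \<in> S"
    and F: "\<And>y. y \<in> S \<Longrightarrow> F y \<in> S \<and> below (F y) y"
    and trans: "\<And>x y z. x \<in> S \<Longrightarrow> y \<in> S \<Longrightarrow> z \<in> S \<Longrightarrow> below x y \<Longrightarrow> below y z \<Longrightarrow> below x z"
    and antisym: "\<And>x y. x \<in> S \<Longrightarrow> y \<in> S \<Longrightarrow> below x y \<Longrightarrow> below y x \<Longrightarrow> x = y"
  shows "\<exists>i < card S. F ((F ^^ i) x) = (F ^^ i) x"
proof -
  have S: "(F ^^ n) x \<in> S" for n
    by (induction n) (use x F in auto)
  have step: "below ((F ^^ Suc n) x) ((F ^^ n) x)" for n
    using F[OF S[of n]] by simp
  have chain: "below ((F ^^ j) x) ((F ^^ i) x)" if "i < j" for i j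
    using that
  proof (induction j)
    case (Suc j)
    show ?case
    proof (cases "i = j")
      case False
      then have "below ((F ^^ j) x) ((F ^^ i) x)" using Suc by simp
      then show ?thesis using trans[OF S S S step[of j]] by blast
    qed (use step[of j] in simp)
  qed simp
  obtain i j where ij: "i < j" "j \<le> card S" "(F ^^ i) x = (F ^^ j) x"
    using finite_nat_seq_repeats[OF fin, of "\<lambda>n. (F ^^ n) x"] S by auto
  have "(F ^^ Suc i) x = (F ^^ i) x"
  proof (cases "Suc i = j")
    case False
    then have "below ((F ^^ j) x) ((F ^^ Suc i) x)" using ij by (intro chain) simp
    moreover have "below ((F ^^ Suc i) x) ((F ^^ j) x)" using step[of i] ij(3) by simp
    ultimately have "(F ^^ Suc i) x = (F ^^ j) x" using antisym[OF S S] by blast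
    then show ?thesis using ij(3) by simp
  qed (use ij in simp)
  moreover have "i < card S" using ij by simp
  ultimately show ?thesis by auto
qed

lemma local_monoid_trans:
  assumes "monoid T" and "c \<in> carrier T"
    and "a \<in> carrier (local_monoid T b)" and "b \<in> carrier (local_monoid T c)"
  shows "a \<in> carrier (local_monoid T c)"
proof -
  interpret monoid T by fact
  have a: "a \<in> carrier T" "b \<otimes>\<^bsub>T\<^esub> a = a" "a \<otimes>\<^bsub>T\<^esub> b = a" and b: "b \<in> carrier T"
    "c \<otimes>\<^bsub>T\<^esub> b = b" "b \<otimes>\<^bsub>T\<^esub> c = b"
    using assms(3,4) by (auto simp: local_monoid_def)
  have "c \<otimes>\<^bsub>T\<^esub> a = (c \<otimes>\<^bsub>T\<^esub> b) \<otimes>\<^bsub>T\<^esub> a"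
    using a(1) b(1) assms(2) by (simp only: m_assoc a(2))
  also have "\<dots> = a" by (simp only: b(2) a(2))
  finally have "c \<otimes>\<^bsub>T\<^esub> a = a" .
  have "a \<otimes>\<^bsub>T\<^esub> c = a \<otimes>\<^bsub>T\<^esub> (b \<otimes>\<^bsub>T\<^esub> c)"
    using a(1) b(1) assms(2) by (simp only: m_assoc[symmetric] a(3))
  also have "\<dots> = a" by (simp only: b(3) a(3))
  finally show ?thesis using a(1) \<open>c \<otimes>\<^bsub>T\<^esub> a = a\<close> by (simp add: local_monoid_def)
qed
lemma local_monoid_antisym:
  assumes "a \<in> carrier (local_monoid T b)" and "b \<in> carrier (local_monoid T a)"
  shows "a = b"
proof -
  have "b \<otimes>\<^bsub>T\<^esub> a = a" and "b \<otimes>\<^bsub>T\<^esub> a = b"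
    using assms by (simp_all add: local_monoid_def)
  then show ?thesis by simp
qed

definition absorb :: "nat monoid \<Rightarrow> nat \<Rightarrow> nat \<Rightarrow> nat" where
  "absorb T e x = idem_pow T (e \<otimes>\<^bsub>T\<^esub> (x \<otimes>\<^bsub>T\<^esub> e))"

definition absorb_all :: "nat monoid \<Rightarrow> ('a \<Rightarrow> nat) \<Rightarrow> 'a list \<Rightarrow> nat \<Rightarrow> nat" where
  "absorb_all T f as e = foldl (\<lambda>e a. absorb T e (f a)) e as"

abbreviation idempotents :: "nat monoid \<Rightarrow> nat set" where
  "idempotents T \<equiv> {e \<in> carrier T. e \<otimes>\<^bsub>T\<^esub> e = e}"

lemma absorb_below:
  assumes T: "T \<in> finmon" and e: "e \<in> idempotents T" and x: "x \<in> carrier T"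
  shows "absorb T e x \<in> idempotents T \<inter> carrier (local_monoid T e)"
proof -
  have mT: "monoid T" using finmonD[OF T] by blast
  let ?y = "e \<otimes>\<^bsub>T\<^esub> (x \<otimes>\<^bsub>T\<^esub> e)"
  have y: "?y \<in> carrier (local_monoid T e)" using conj_in_local_monoid[OF mT _ _ x] e by simp
  then have "?y [^]\<^bsub>local_monoid T e\<^esub> (fact (card (carrier T)) :: nat) \<in> carrier (local_monoid T e)"
    using monoid.nat_pow_closed[OF monoid_local_monoid[OF mT]] e by blast
  then have "absorb T e x \<in> carrier (local_monoid T e)"
    using local_monoid_nat_pow[OF mT y fact_ge_1] by (simp add: absorb_def idem_pow_def)
  moreover have "?y \<in> carrier T" using y by (simp add: local_monoid_def)
  then have "absorb T e x \<in> idempotents T"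
    unfolding absorb_def using idem_pow_closed[OF T] idem_pow_idempotent[OF T] by blast
  ultimately show ?thesis by blast
qed

lemma absorb_all_below:
  assumes T: "T \<in> finmon" and f: "\<forall>a\<in>set as. f a \<in> carrier T" and e: "e \<in> idempotents T"
  shows "absorb_all T f as e \<in> idempotents T \<inter> carrier (local_monoid T e)"
  using f e
proof (induction as arbitrary: e)
  case Nil then show ?case by (simp add: absorb_all_def local_monoid_def)
next
  case (Cons a as)
  have mT: "monoid T" using finmonD[OF T] by blast
  have e': "absorb T e (f a) \<in> idempotents T \<inter> carrier (local_monoid T e)"
    using absorb_below[OF T] Cons.prems by simp
  then have "absorb_all T f as (absorb T e (f a))
      \<in> idempotents T \<inter> carrier (local_monoid T (absorb T e (f a)))"
    using Cons by simp
  with e' show ?case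
    using local_monoid_trans[OF mT] Cons.prems(2) by (simp add: absorb_all_def) blast
qed

lemma absorb_all_fixed:
  assumes T: "T \<in> finmon" and f: "\<forall>a\<in>set as. f a \<in> carrier T" and e: "e \<in> idempotents T"
    and fixed: "absorb_all T f as e = e"
  shows "\<forall>a\<in>set as. absorb T e (f a) = e"
  using f e fixed
proof (induction as arbitrary: e)
  case (Cons a as)
  let ?e' = "absorb T e (f a)"
  have e': "?e' \<in> idempotents T" "?e' \<in> carrier (local_monoid T e)"
    using absorb_below[OF T] Cons.prems by auto
  have "e \<in> carrier (local_monoid T ?e')"
    using absorb_all_below[OF T _ e'(1), where f = f and as = as] Cons.prems
    by (simp add: absorb_all_def)
  then have "?e' = e" using local_monoid_antisym e'(2) by blast
  then show ?case using Cons by (simp add: absorb_all_def)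
qed simp

definition absorb_limit :: "nat monoid \<Rightarrow> ('a \<Rightarrow> nat) \<Rightarrow> 'a list \<Rightarrow> nat" where
  "absorb_limit T f as = (absorb_all T f as ^^ card (carrier T)) \<one>\<^bsub>T\<^esub>"

lemma absorb_all_stabilizes:
  assumes T: "T \<in> finmon" and f: "\<forall>a\<in>set as. f a \<in> carrier T"
  shows "\<exists>i \<le> card (carrier T). absorb_all T f as ((absorb_all T f as ^^ i) \<one>\<^bsub>T\<^esub>) =
    (absorb_all T f as ^^ i) \<one>\<^bsub>T\<^esub>"
proof -
  have mT: "monoid T" and fin: "finite (carrier T)" using finmonD[OF T] by auto
  have "\<exists>i < card (idempotents T). absorb_all T f as ((absorb_all T f as ^^ i) \<one>\<^bsub>T\<^esub>) =
    (absorb_all T f as ^^ i) \<one>\<^bsub>T\<^esub>"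
  proof (rule funpow_descending_stabilizes[where below = "\<lambda>a b. a \<in> carrier (local_monoid T b)"])
    show "finite (idempotents T)" using fin by simp
    show "\<one>\<^bsub>T\<^esub> \<in> idempotents T" using mT by simp
  next
    fix y assume "y \<in> idempotents T"
    then show "absorb_all T f as y \<in> idempotents T \<and>
      absorb_all T f as y \<in> carrier (local_monoid T y)"
      using absorb_all_below[OF T f] by blast
  next
    fix a b c assume "c \<in> idempotents T" "a \<in> carrier (local_monoid T b)" "b \<in> carrier (local_monoid T c)"
    then show "a \<in> carrier (local_monoid T c)" using local_monoid_trans[OF mT] by blast
  qed (rule local_monoid_antisym)
  then obtain i where "i < card (idempotents T)"
    and "absorb_all T f as ((absorb_all T f as ^^ i) \<one>\<^bsub>T\<^esub>) = (absorb_all T f as ^^ i) \<one>\<^bsub>T\<^esub>"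
    by blast
  moreover have "card (idempotents T) \<le> card (carrier T)" using fin by (intro card_mono) auto
  ultimately show ?thesis by (intro exI[of _ i]) simp
qed

lemma absorb_limit_eq:
  assumes T: "T \<in> finmon" and f: "\<forall>a\<in>set as. f a \<in> carrier T" and n: "card (carrier T) \<le> n"
  shows "(absorb_all T f as ^^ n) \<one>\<^bsub>T\<^esub> = absorb_limit T f as"
proof -
  obtain i where i: "i \<le> card (carrier T)"
    and fixed: "absorb_all T f as ((absorb_all T f as ^^ i) \<one>\<^bsub>T\<^esub>) = (absorb_all T f as ^^ i) \<one>\<^bsub>T\<^esub>"
    using absorb_all_stabilizes[OF T f] by blast
  have "(absorb_all T f as ^^ n) \<one>\<^bsub>T\<^esub> = (absorb_all T f as ^^ i) \<one>\<^bsub>T\<^esub>"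
    using fixed i n by (intro funpow_fixed_from) simp_all
  moreover have "absorb_limit T f as = (absorb_all T f as ^^ i) \<one>\<^bsub>T\<^esub>"
    unfolding absorb_limit_def using fixed i by (intro funpow_fixed_from)
  ultimately show ?thesis by simp
qed

lemma absorb_limit_fixed:
  assumes T: "T \<in> finmon" and f: "\<forall>a\<in>set as. f a \<in> carrier T"
  shows "absorb_limit T f as \<in> idempotents T"
    and "\<forall>a\<in>set as. absorb T (absorb_limit T f as) (f a) = absorb_limit T f as"
proof -
  have mT: "monoid T" using finmonD[OF T] by blast
  have idem: "(absorb_all T f as ^^ n) \<one>\<^bsub>T\<^esub> \<in> idempotents T" for n
    using absorb_all_below[OF T f] mT by (induction n) auto
  then show "absorb_limit T f as \<in> idempotents T" by (simp add: absorb_limit_def)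
  have "absorb_all T f as (absorb_limit T f as) = absorb_limit T f as"
    using absorb_limit_eq[OF T f, of "Suc (card (carrier T))"] by (simp add: absorb_limit_def)
  then show "\<forall>a\<in>set as. absorb T (absorb_limit T f as) (f a) = absorb_limit T f as"
    using absorb_all_fixed[OF T f] idem by (simp add: absorb_limit_def)
qed


definition iabsorb :: "'a set \<Rightarrow> 'a io \<Rightarrow> 'a \<Rightarrow> 'a io" where
  "iabsorb A v a = omega A (imult A v (imult A (gen A a) v))"

definition iabsorb_all :: "'a set \<Rightarrow> 'a list \<Rightarrow> 'a io \<Rightarrow> 'a io" where
  "iabsorb_all A as v = foldl (iabsorb A) v as"

lemma iabsorb_all_Omega: "set as \<subseteq> A \<Longrightarrow> v \<in> Omega A \<Longrightarrow> iabsorb_all A as v \<in> Omega A"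
  unfolding iabsorb_all_def iabsorb_def
  by (induction as arbitrary: v) (simp_all add: omega_Omega imult_Omega gen_Omega)

lemma iabsorb_all_val:
  assumes "set as \<subseteq> A" and "v \<in> Omega A" and f: "valid_asg A T f"
  shows "iabsorb_all A as v T f = absorb_all T f as (v T f)"
  using assms(1,2)
proof (induction as arbitrary: v)
  case (Cons a as)
  have "imult A v (imult A (gen A a) v) \<in> Omega A" using Cons.prems by (simp add: imult_Omega gen_Omega)
  then have "iabsorb A v a T f = absorb T (v T f) (f a)"
    using f by (simp add: iabsorb_def absorb_def omega_val imult_val gen_val)
  moreover have "iabsorb A v a \<in> Omega A"
    using Cons.prems by (simp add: iabsorb_def omega_Omega imult_Omega gen_Omega)
  ultimately show ?case using Cons by (simp add: iabsorb_all_def absorb_all_def)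
qed (simp add: iabsorb_all_def absorb_all_def)

lemma iabsorb_iter_Omega: "set as \<subseteq> A \<Longrightarrow> (iabsorb_all A as ^^ n) (ione A) \<in> Omega A"
  by (induction n) (simp_all add: ione_Omega iabsorb_all_Omega)

lemma iabsorb_iter_val:
  assumes "set as \<subseteq> A" and "valid_asg A T f"
  shows "(iabsorb_all A as ^^ n) (ione A) T f = (absorb_all T f as ^^ n) \<one>\<^bsub>T\<^esub>"
  using assms iabsorb_all_val[OF assms(1) iabsorb_iter_Omega[OF assms(1)]]
  by (induction n) (simp_all add: ione_val)

text \<open>Each step ends with an \<omega>-power, which is provably 1.\<close>
lemma iabsorb_iter_provable_one:
  assumes as: "set as \<subseteq> A" and "as \<noteq> []"
  shows "((iabsorb_all A as ^^ Suc n) (ione A), ione A) \<in> provable A {eps_omega}"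
proof -
  obtain bs b where asb: "as = bs @ [b]" using \<open>as \<noteq> []\<close> by (metis rev_exhaust)
  define w where "w = iabsorb_all A bs ((iabsorb_all A as ^^ n) (ione A))"
  have "w \<in> Omega A" "b \<in> A"
    using as asb iabsorb_all_Omega iabsorb_iter_Omega[OF as] by (auto simp: w_def)
  then have "(omega A (imult A w (imult A (gen A b) w)), ione A) \<in> provable A {eps_omega}"
    by (intro omega_provable_one imult_Omega gen_Omega)
  then show ?thesis by (simp add: asb w_def iabsorb_all_def iabsorb_def)
qed

definition absorb_limit_io :: "'a set \<Rightarrow> 'a list \<Rightarrow> 'a io" where
  "absorb_limit_io A as = (\<lambda>T f. if valid_asg A T f then absorb_limit T f as else undefined)"

lemma absorb_limit_io_Omega:
  assumes as: "set as \<subseteq> A"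
  shows "absorb_limit_io A as \<in> Omega A"
proof (rule OmegaI)
  fix S T h f assume S: "S \<in> finmon" and T: "T \<in> finmon" and h: "h \<in> mhom S T"
    and f: "f \<in> A \<rightarrow>\<^sub>E carrier S"
  define g where "g = restrict (h \<circ> f) A"
  have fS: "valid_asg A S f" and gT: "valid_asg A T g"
    using S f valid_asg_mhom[OF T h f] by (auto simp: g_def valid_asg_def)
  have carr: "\<forall>a\<in>set as. f a \<in> carrier S" "\<forall>a\<in>set as. g a \<in> carrier T"
    using as valid_asgD[OF fS] valid_asgD[OF gT] by auto
  define n where "n = max (card (carrier S)) (card (carrier T))"
  have "absorb_limit T g as = (absorb_all T g as ^^ n) \<one>\<^bsub>T\<^esub>"
    using absorb_limit_eq[OF T carr(2)] by (simp add: n_def)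
  also have "\<dots> = h ((absorb_all S f as ^^ n) \<one>\<^bsub>S\<^esub>)"
    using Omega_natural[OF iabsorb_iter_Omega[OF as] S T h f] iabsorb_iter_val[OF as] fS gT
    by (simp add: g_def)
  also have "\<dots> = h (absorb_limit S f as)"
    using absorb_limit_eq[OF S carr(1)] by (simp add: n_def)
  finally show "absorb_limit_io A as T (restrict (h \<circ> f) A) = h (absorb_limit_io A as S f)"
    using fS gT by (simp add: absorb_limit_io_def g_def)
next
  fix T f assume f: "valid_asg A T f"
  then have "T \<in> finmon" "\<forall>a\<in>set as. f a \<in> carrier T" using as valid_asgD[OF f] by auto
  then show "absorb_limit_io A as T f \<in> carrier T"
    using absorb_limit_fixed(1)[of T as f] f by (simp add: absorb_limit_io_def)
qed (simp add: absorb_limit_io_def)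

lemma iabsorb_iter_converges:
  assumes as: "set as \<subseteq> A" and Ts: "Ts \<in> fin_tests" and n: "(\<Sum>T\<in>Ts. card (carrier T)) \<le> n"
  shows "agree_on Ts ((iabsorb_all A as ^^ n) (ione A)) (absorb_limit_io A as)"
  unfolding agree_on_def
proof (intro ballI ext)
  fix T f assume "T \<in> Ts"
  then have card: "card (carrier T) \<le> n" using card_le_sum_fin_tests[OF Ts] n by (meson order_trans)
  show "(iabsorb_all A as ^^ n) (ione A) T f = absorb_limit_io A as T f"
  proof (cases "valid_asg A T f")
    case True
    then have "T \<in> finmon" "\<forall>a\<in>set as. f a \<in> carrier T" using as valid_asgD[OF True] by auto
    have "(iabsorb_all A as ^^ n) (ione A) T f = (absorb_all T f as ^^ n) \<one>\<^bsub>T\<^esub>"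
      by (rule iabsorb_iter_val[OF as True])
    also have "\<dots> = absorb_limit T f as" by (rule absorb_limit_eq) fact+
    finally show ?thesis using True by (simp add: absorb_limit_io_def)
  next
    case False
    then show ?thesis
      using Omega_undefined[OF iabsorb_iter_Omega[OF as, of n]] by (simp add: absorb_limit_io_def)
  qed
qed

lemma absorb_limit_io_provable_one:
  assumes as: "set as \<subseteq> A"
  shows "(absorb_limit_io A as, ione A) \<in> provable A {eps_omega}"
proof (cases "as = []")
  case True
  have "absorb_all T f [] = id" for T and f :: "'a \<Rightarrow> nat"
    by (simp add: absorb_all_def fun_eq_iff)
  with True have "absorb_limit_io A as = ione A"
    by (intro Omega_eqI[OF absorb_limit_io_Omega[OF as] ione_Omega])
      (simp add: absorb_limit_io_def absorb_limit_def ione_val)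
  then show ?thesis by (simp add: eps_omega_provable_refl ione_Omega)
next
  case False
  show ?thesis
  proof (rule provable_approx[OF absorb_limit_io_Omega[OF as] ione_Omega])
    fix Ts assume Ts: "Ts \<in> fin_tests"
    then have "agree_on Ts ((iabsorb_all A as ^^ Suc (\<Sum>T\<in>Ts. card (carrier T))) (ione A))
        (absorb_limit_io A as)"
      by (intro iabsorb_iter_converges[OF as]) simp_all
    then show "\<exists>s' t'. (s', t') \<in> provable A {eps_omega} \<and>
        agree_on Ts s' (absorb_limit_io A as) \<and> agree_on Ts t' (ione A)"
      using iabsorb_iter_provable_one[OF as False] agree_on_refl by blast
  qed
qed

lemma absorb_limit_io_absorbs:
  assumes "set as = A" and f: "valid_asg A T f"
  shows "absorb_limit_io A as T f \<in> idempotents T"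
    and "\<forall>a\<in>A. absorb T (absorb_limit_io A as T f) (f a) = absorb_limit_io A as T f"
proof -
  have "T \<in> finmon" "\<forall>a\<in>set as. f a \<in> carrier T" using assms valid_asgD[OF f] by auto
  then show "absorb_limit_io A as T f \<in> idempotents T"
    and "\<forall>a\<in>A. absorb T (absorb_limit_io A as T f) (f a) = absorb_limit_io A as T f"
    using absorb_limit_fixed[of T as f] assms by (simp_all add: absorb_limit_io_def)
qed

text \<open>By induction on words, then for all implicit operations by density.\<close>
lemma subst_provable_identity:
  assumes wf: "wf_pseudoids \<Sigma>" and "\<Sigma> \<noteq> {}" and A: "finite A" and \<sigma>: "\<sigma> ` A \<subseteq> Omega A"
    and \<sigma>_gen: "\<And>a. a \<in> A \<Longrightarrow> (\<sigma> a, gen A a) \<in> provable A \<Sigma>" and u: "u \<in> Omega A"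
  shows "(subst A A \<sigma> u, u) \<in> provable A \<Sigma>"
proof -
  obtain B u0 v0 where \<Sigma>: "(B, u0, v0) \<in> \<Sigma>" using \<open>\<Sigma> \<noteq> {}\<close> by auto
  have words: "(subst A A \<sigma> (word A xs), word A xs) \<in> provable A \<Sigma>" if "set xs \<subseteq> A" for xs
    using that
  proof (induction xs)
    case Nil
    then show ?case
      using provable_refl[OF \<Sigma> ione_Omega] by (simp add: word_def subst_ione[OF \<sigma>])
  next
    case (Cons a xs)
    then show ?case
      using provable_mult[OF wf \<sigma>_gen] by (simp add: word_Cons subst_imult[OF \<sigma>] subst_gen[OF \<sigma>])
  qed
  show ?thesis
  proof (rule provable_approx[OF subst_Omega[OF \<sigma> u] u])
    fix Ts assume "Ts \<in> fin_tests"
    then obtain xs where "set xs \<subseteq> A" and "agree_on Ts (word A xs) u"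
      using words_dense[OF A u] by blast
    then show "\<exists>s' t'. (s', t') \<in> provable A \<Sigma> \<and>
        agree_on Ts s' (subst A A \<sigma> u) \<and> agree_on Ts t' u"
      using words subst_agree_on by blast
  qed
qed

lemma provable_conj_subst:
  assumes wf: "wf_pseudoids \<Sigma>" and "\<Sigma> \<noteq> {}" and A: "finite A"
    and E: "E \<in> Omega A" and E_one: "(E, ione A) \<in> provable A \<Sigma>" and u: "u \<in> Omega A"
  shows "(u, imult A E (subst A A (\<lambda>a. imult A E (imult A (gen A a) E)) u)) \<in> provable A \<Sigma>"
proof -
  define \<sigma> where "\<sigma> a = imult A E (imult A (gen A a) E)" for a
  obtain B u0 v0 where \<Sigma>: "(B, u0, v0) \<in> \<Sigma>" using \<open>\<Sigma> \<noteq> {}\<close> by auto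
  have \<sigma>: "\<sigma> ` A \<subseteq> Omega A" using E by (auto simp: \<sigma>_def imult_Omega gen_Omega)
  have "(\<sigma> a, gen A a) \<in> provable A \<Sigma>" if "a \<in> A" for a
    using provable_mult[OF wf E_one provable_mult[OF wf provable_refl[OF \<Sigma> gen_Omega[OF that]] E_one]]
      gen_Omega[OF that]
    by (simp add: \<sigma>_def imult_one_left imult_one_right)
  then have "(subst A A \<sigma> u, u) \<in> provable A \<Sigma>"
    by (rule subst_provable_identity[OF wf \<open>\<Sigma> \<noteq> {}\<close> A \<sigma> _ u])
  moreover have "(imult A E (subst A A \<sigma> u), subst A A \<sigma> u) \<in> provable A \<Sigma>"
    using provable_mult[OF wf E_one provable_refl[OF \<Sigma> subst_Omega[OF \<sigma> u]]] subst_Omega[OF \<sigma> u]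
    by (simp add: imult_one_left)
  ultimately have "(imult A E (subst A A \<sigma> u), u) \<in> provable A \<Sigma>"
    using trans_provable by (blast dest: transD)
  then show ?thesis unfolding \<sigma>_def by (rule provable_sym)
qed

lemma conj_subst_eq:
  assumes A: "set as = A" and s: "s \<in> Omega A" and t: "t \<in> Omega A"
    and st: "\<forall>H\<in>models {eps_omega}. holds_in H (A, s, t)"
  defines "E \<equiv> absorb_limit_io A as"
  defines "\<sigma> \<equiv> \<lambda>a. imult A E (imult A (gen A a) E)"
  shows "imult A E (subst A A \<sigma> s) = imult A E (subst A A \<sigma> t)"
proof -
  have E: "E \<in> Omega A" using absorb_limit_io_Omega[of as A] A by (simp add: E_def)
  have \<sigma>: "\<sigma> ` A \<subseteq> Omega A" using E by (auto simp: \<sigma>_def imult_Omega gen_Omega)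
  show ?thesis
  proof (rule Omega_eqI)
    show "imult A E (subst A A \<sigma> s) \<in> Omega A" "imult A E (subst A A \<sigma> t) \<in> Omega A"
      using E s t by (simp_all add: imult_Omega subst_Omega[OF \<sigma>])
  next
    fix T f assume f: "valid_asg A T f"
    have e: "E T f \<in> idempotents T" "\<forall>a\<in>A. absorb T (E T f) (f a) = E T f"
      using absorb_limit_io_absorbs[OF A f] by (simp_all add: E_def)
    have "(\<lambda>a\<in>A. \<sigma> a T f) = (\<lambda>a\<in>A. E T f \<otimes>\<^bsub>T\<^esub> (f a \<otimes>\<^bsub>T\<^esub> E T f))"
      using f by (simp add: \<sigma>_def imult_val gen_val)
    then show "imult A E (subst A A \<sigma> s) T f = imult A E (subst A A \<sigma> t) T f"
      using consequence_at_local_group[OF valid_asg_finmon[OF f] _ _ _ _ s t st] valid_asgD[OF f] e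
      by (simp add: imult_val subst_val f absorb_def)
  qed
qed

theorem theorem8p3:
  shows "h_strong eps_omega (TYPE('a))"
  unfolding h_strong_def
proof (intro allI impI, elim conjE)
  fix A :: "'a set" and s t
  assume A: "finite A" and s: "s \<in> Omega A" and t: "t \<in> Omega A"
    and st: "\<forall>T\<in>models {eps_omega}. holds_in T (A, s, t)"
  obtain as where as: "set as = A" using finite_list[OF A] by blast
  let ?E = "absorb_limit_io A as"
  let ?conj = "\<lambda>u. imult A ?E (subst A A (\<lambda>a. imult A ?E (imult A (gen A a) ?E)) u)"
  have E: "?E \<in> Omega A" "(?E, ione A) \<in> provable A {eps_omega}"
    using as by (simp_all add: absorb_limit_io_Omega absorb_limit_io_provable_one)
  have "(s, ?conj s) \<in> provable A {eps_omega}"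
    by (rule provable_conj_subst[OF wf_eps_omega _ A E s]) simp
  also have "?conj s = ?conj t" by (rule conj_subst_eq[OF as s t st])
  finally have "(s, ?conj t) \<in> provable A {eps_omega}" .
  moreover have "(?conj t, t) \<in> provable A {eps_omega}"
    by (rule provable_sym, rule provable_conj_subst[OF wf_eps_omega _ A E t]) simp
  ultimately show "(s, t) \<in> provable A {eps_omega}"
    using transD[OF trans_provable] by blast
qed

end
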